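(* Let $H_0,H_1$ be complex Hilbert spaces, $G$ a densely defined closed operator from $H_0$ into $H_1$ and $D$ a densely defined closed operator from $H_1$ into $H_0$ with $-G^*\subset D$. Let $H$ be a Hilbert space and $\kappa\in\mathcal{L}(\mathrm{BD}(G),H)$ injective with dense range. Let $a\in\mathcal{L}(H_1)$ and $m\in\mathcal{L}(H_0)$ be coercive. Then the Dirichlet-to-Neumann operator $\Lambda_H$ in $H$ associated with $-DaG+m$ is m-sectorial. In particular, if both $a$ and $m$ are self-adjoint, then $\Lambda_H$ is self-adjoint.
   Context: Put $\mathring D=-G^*$ and $\mathring G=-D^*$. Domains carry graph inner products, e.g. $(u,v)_{\mathrm{dom}(G)}=(u,v)_{H_0}+(Gu,Gv)_{H_1}$. $\mathrm{BD}(G)$ is the orthogonal complement of $\mathrm{dom}(\mathring G)$ in $\mathrm{dom}(G)$, $\mathrm{BD}(D)$ the orthogonal complement of $\mathrm{dom}(\mathring D)$ in $\mathrm{dom}(D)$, with induced inner products; $\pi_{\mathrm{BD}(D)}$ is the orthogonal projection of $\mathrm{dom}(D)$ onto $\mathrm{BD}(D)$. $G$ maps $\mathrm{BD}(G)$ into $\mathrm{BD}(D)$. Coercive: $\mathrm{Re}(Mx,x)\ge\mu\|x\|^2$ for some $\mu>0$. For coercive $a,m$ and $u_0\in\mathrm{BD}(G)$ there is a unique $u\in\mathrm{dom}(G)$ with $aGu\in\mathrm{dom}(D)$, $mu-DaGu=0$, $u-u_0\in\mathrm{dom}(\mathring G)$; set $\Lambda u_0=\pi_{\mathrm{BD}(D)}(aGu)$.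 $\kappa^*\colon H\to\mathrm{BD}(G)$ denotes the Hilbert space adjoint of $\kappa$. The operator $\Lambda_H$ in $H$ is defined by: for $\varphi,\psi\in H$, $\varphi\in\mathrm{dom}(\Lambda_H)$ and $\Lambda_H\varphi=\psi$ iff there exists $u_0\in\mathrm{BD}(G)$ with $\kappa(u_0)=\varphi$ and $\Lambda u_0=G\kappa^*\psi$. *)

theory Defs
  imports "HOL-Analysis.Analysis"
begin

text \<open>The distribution has no complex inner product spaces, so we introduce them.
  The inner product is conjugate-linear in the first and linear in the second argument.\<close>

class complex_inner = real_normed_vector +
  fixes scaleC :: "complex \<Rightarrow> 'a \<Rightarrow> 'a" (infixr \<open>*\<^sub>C\<close> 75)
    and cinner :: "'a \<Rightarrow> 'a \<Rightarrow> complex"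
  assumes scaleC_add_right: "c *\<^sub>C (x + y) = c *\<^sub>C x + c *\<^sub>C y"
    and scaleC_add_left: "(b + c) *\<^sub>C x = b *\<^sub>C x + c *\<^sub>C x"
    and scaleC_scaleC: "b *\<^sub>C (c *\<^sub>C x) = (b * c) *\<^sub>C x"
    and scaleC_one: "1 *\<^sub>C x = x"
    and scaleR_scaleC: "scaleR r x = complex_of_real r *\<^sub>C x"
    and cinner_commute: "cinner x y = cnj (cinner y x)"
    and cinner_add_left: "cinner (x + y) z = cinner x z + cinner y z"
    and cinner_scaleC_left: "cinner (c *\<^sub>C x) y = cnj c * cinner x y"
    and norm_eq_sqrt_cinner: "norm x = sqrt (Re (cinner x x))"

class chilbert_space = complex_inner + complete_space

section \<open>(Unbounded) linear operators, represented by their graphs\<close>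

definition clinear_op :: "('a::complex_inner \<times> 'b::complex_inner) set \<Rightarrow> bool" where
  "clinear_op T \<longleftrightarrow> (0, 0) \<in> T
     \<and> (\<forall>x y x' y'. (x, y) \<in> T \<longrightarrow> (x', y') \<in> T \<longrightarrow> (x + x', y + y') \<in> T)
     \<and> (\<forall>c x y. (x, y) \<in> T \<longrightarrow> (c *\<^sub>C x, c *\<^sub>C y) \<in> T)
     \<and> (\<forall>y. (0, y) \<in> T \<longrightarrow> y = 0)"

definition opdom :: "('a \<times> 'b) set \<Rightarrow> 'a set" where
  "opdom T = fst ` T"

definition opapp :: "('a \<times> 'b) set \<Rightarrow> 'a \<Rightarrow> 'b" where
  "opapp T x = (THE y. (x, y) \<in> T)"

definition densely_defined :: "('a::complex_inner \<times> 'b) set \<Rightarrow> bool" where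
  "densely_defined T \<longleftrightarrow> closure (opdom T) = UNIV"

definition dd_closed_op :: "('a::complex_inner \<times> 'b::complex_inner) set \<Rightarrow> bool" where
  "dd_closed_op T \<longleftrightarrow> clinear_op T \<and> closed T \<and> densely_defined T"

definition adjoint :: "('a::complex_inner \<times> 'b::complex_inner) set \<Rightarrow> ('b \<times> 'a) set" where
  "adjoint T = {(y, z). \<forall>x w. (x, w) \<in> T \<longrightarrow> cinner w y = cinner x z}"

definition neg_op :: "('a \<times> 'b::uminus) set \<Rightarrow> ('a \<times> 'b) set" where
  "neg_op T = {(x, - y) | x y. (x, y) \<in> T}"

definition Dring :: "('a::complex_inner \<times> 'b::complex_inner) set \<Rightarrow> ('b \<times> 'a) set" where
  "Dring G = neg_op (adjoint G)"

definition Gring :: "('b::complex_inner \<times> 'a::complex_inner) set \<Rightarrow> ('a \<times> 'b) set" where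
  "Gring D = neg_op (adjoint D)"

definition gip :: "('a::complex_inner \<times> 'b::complex_inner) set \<Rightarrow> 'a \<Rightarrow> 'a \<Rightarrow> complex" where
  "gip T u v = cinner u v + cinner (opapp T u) (opapp T v)"

definition gnorm :: "('a::complex_inner \<times> 'b::complex_inner) set \<Rightarrow> 'a \<Rightarrow> real" where
  "gnorm T u = sqrt (Re (gip T u u))"

definition BD :: "('a::complex_inner \<times> 'b::complex_inner) set \<Rightarrow> ('a \<times> 'b) set \<Rightarrow> 'a set" where
  "BD T T0 = {u \<in> opdom T. \<forall>v \<in> opdom T0. gip T v u = 0}"

definition BDG :: "('a::complex_inner \<times> 'b::complex_inner) set \<Rightarrow> ('b \<times> 'a) set \<Rightarrow> 'a set" where
  "BDG G D = BD G (Gring D)"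

definition BDD :: "('a::complex_inner \<times> 'b::complex_inner) set \<Rightarrow> ('b \<times> 'a) set \<Rightarrow> 'b set" where
  "BDD G D = BD D (Dring G)"

definition projBD :: "('a::complex_inner \<times> 'b::complex_inner) set \<Rightarrow> ('a \<times> 'b) set \<Rightarrow> 'a \<Rightarrow> 'a" where
  "projBD T T0 w = (THE p. p \<in> BD T T0 \<and> (\<forall>q \<in> BD T T0. gip T (w - p) q = 0))"

definition clinear_on :: "'a::complex_inner set \<Rightarrow> ('a \<Rightarrow> 'b::complex_inner) \<Rightarrow> bool" where
  "clinear_on S f \<longleftrightarrow> (\<forall>x \<in> S. \<forall>y \<in> S. f (x + y) = f x + f y)
     \<and> (\<forall>c. \<forall>x \<in> S. f (c *\<^sub>C x) = c *\<^sub>C f x)"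

definition bounded_clinear_op :: "('a::complex_inner \<Rightarrow> 'b::complex_inner) \<Rightarrow> bool" where
  "bounded_clinear_op f \<longleftrightarrow> clinear_on UNIV f \<and> (\<exists>K. \<forall>x. norm (f x) \<le> norm x * K)"

definition coercive :: "('a::complex_inner \<Rightarrow> 'a) \<Rightarrow> bool" where
  "coercive M \<longleftrightarrow> (\<exists>\<mu>>0. \<forall>x. Re (cinner (M x) x) \<ge> \<mu> * (norm x)\<^sup>2)"

definition bounded_selfadjoint :: "('a::complex_inner \<Rightarrow> 'a) \<Rightarrow> bool" where
  "bounded_selfadjoint M \<longleftrightarrow> (\<forall>x y. cinner (M x) y = cinner x (M y))"

definition dtn_sol :: "('a::complex_inner \<times> 'b::complex_inner) set \<Rightarrow> ('b \<times> 'a) set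
    \<Rightarrow> ('b \<Rightarrow> 'b) \<Rightarrow> ('a \<Rightarrow> 'a) \<Rightarrow> 'a \<Rightarrow> 'a" where
  "dtn_sol G D a m u0 = (THE u. u \<in> opdom G \<and> a (opapp G u) \<in> opdom D
      \<and> m u - opapp D (a (opapp G u)) = 0 \<and> u - u0 \<in> opdom (Gring D))"

definition dtn_Lambda :: "('a::complex_inner \<times> 'b::complex_inner) set \<Rightarrow> ('b \<times> 'a) set
    \<Rightarrow> ('b \<Rightarrow> 'b) \<Rightarrow> ('a \<Rightarrow> 'a) \<Rightarrow> 'a \<Rightarrow> 'b" where
  "dtn_Lambda G D a m u0 = projBD D (Dring G) (a (opapp G (dtn_sol G D a m u0)))"

definition kappa_adj :: "('a::complex_inner \<times> 'b::complex_inner) set \<Rightarrow> ('b \<times> 'a) set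
    \<Rightarrow> ('a \<Rightarrow> 'h::complex_inner) \<Rightarrow> 'h \<Rightarrow> 'a" where
  "kappa_adj G D \<kappa> \<psi> = (THE w. w \<in> BDG G D \<and> (\<forall>v \<in> BDG G D. cinner (\<kappa> v) \<psi> = gip G v w))"

definition dtn_H :: "('a::complex_inner \<times> 'b::complex_inner) set \<Rightarrow> ('b \<times> 'a) set
    \<Rightarrow> ('b \<Rightarrow> 'b) \<Rightarrow> ('a \<Rightarrow> 'a) \<Rightarrow> ('a \<Rightarrow> 'h::complex_inner) \<Rightarrow> ('h \<times> 'h) set" where
  "dtn_H G D a m \<kappa> = {(\<phi>, \<psi>). \<exists>u0 \<in> BDG G D. \<kappa> u0 = \<phi>
       \<and> dtn_Lambda G D a m u0 = opapp G (kappa_adj G D \<kappa> \<psi>)}"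

definition numerical_range :: "('a::complex_inner \<times> 'a) set \<Rightarrow> complex set" where
  "numerical_range T = {cinner x (opapp T x) | x. x \<in> opdom T \<and> norm x = 1}"

definition sector :: "real \<Rightarrow> real \<Rightarrow> complex set" where
  "sector \<gamma> \<theta> = {z. z = complex_of_real \<gamma> \<or> \<bar>Arg (z - complex_of_real \<gamma>)\<bar> \<le> \<theta>}"

definition shift_op :: "('a::complex_inner \<times> 'a) set \<Rightarrow> complex \<Rightarrow> ('a \<times> 'a) set" where
  "shift_op T c = {(x, y - c *\<^sub>C x) | x y. (x, y) \<in> T}"

definition m_sectorial :: "('a::complex_inner \<times> 'a) set \<Rightarrow> bool" where
  "m_sectorial T \<longleftrightarrow> clinear_op T \<and>
     (\<exists>\<gamma> \<theta>. 0 \<le> \<theta> \<and> \<theta> < pi / 2 \<and> numerical_range T \<subseteq> sector \<gamma> \<theta>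
        \<and> (\<exists>l::real. l < \<gamma> \<and> snd ` shift_op T (complex_of_real l) = UNIV))"

definition selfadjoint_op :: "('a::complex_inner \<times> 'a) set \<Rightarrow> bool" where
  "selfadjoint_op T \<longleftrightarrow> densely_defined T \<and> adjoint T = T"

end

theory Submission
  imports Defs
begin

text \<open>
  The Dirichlet problem \<open>m u - D a G u = 0\<close>, \<open>u - u0 \<in> dom G\<^sup>o\<close> is solved by Lax-Milgram
  in the graph of \<open>G\<^sup>o\<close>, and Green's formula turns the definition of \<open>\<Lambda>\<^sub>H\<close> into a weak
  one: \<open>(\<phi>, \<psi>) \<in> \<Lambda>\<^sub>H\<close> iff \<open>\<phi> = \<kappa> u0\<close> with \<open>u0 \<in> BD(G)\<close> and
  \<open>(\<kappa> v0, \<psi>) = (v0, m u) + (G v0, a G u)\<close> for all \<open>v0 \<in> BD(G)\<close>, where \<open>u\<close> solves the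
  Dirichlet problem with boundary datum \<open>u0\<close>. So \<open>\<Lambda>\<^sub>H\<close> is the operator associated with this
  form on \<open>BD(G)\<close> through the injective dense map \<open>\<kappa>\<close>. Since the solution dominates its
  datum in graph norm, the form is bounded and coercive; hence its numerical range lies in a
  sector of half-angle \<open>arctan (M/\<mu>)\<close>, and Lax-Milgram for the form plus \<open>(\<kappa> \<cdot>, \<kappa> \<cdot>)\<close>
  makes \<open>\<Lambda>\<^sub>H + I\<close> surjective. For self-adjoint \<open>a\<close> and \<open>m\<close> the form is Hermitian, so
  \<open>\<Lambda>\<^sub>H\<close> is symmetric, and a symmetric operator with \<open>\<Lambda>\<^sub>H + I\<close> surjective is
  self-adjoint.
\<close>

section \<open>Complex inner product spaces\<close>

lemma cinner_add_right: "cinner x (y + z) = cinner x y + cinner x z"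
proof -
  have "cinner x (y + z) = cnj (cinner y x) + cnj (cinner z x)"
    by (subst cinner_commute) (simp add: cinner_add_left)
  then show ?thesis by (simp flip: cinner_commute)
qed

lemma cinner_scaleC_right: "cinner x (c *\<^sub>C y) = c * cinner x y"
proof -
  have "cinner x (c *\<^sub>C y) = c * cnj (cinner y x)"
    by (subst cinner_commute) (simp add: cinner_scaleC_left)
  then show ?thesis by (simp flip: cinner_commute)
qed

lemma cinner_zero_left [simp]: "cinner 0 y = 0"
  using cinner_add_left[of 0 0 y] by simp

lemma cinner_zero_right [simp]: "cinner x 0 = 0"
  using cinner_add_right[of x 0 0] by simp

lemma cinner_minus_left: "cinner (- x) y = - cinner x y"
  using cinner_add_left[of x "- x" y] by (simp add: add_eq_0_iff)

lemma cinner_minus_right: "cinner x (- y) = - cinner x y"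
  using cinner_add_right[of x y "- y"] by (simp add: add_eq_0_iff)

lemma cinner_diff_left: "cinner (x - y) z = cinner x z - cinner y z"
  using cinner_add_left[of x "- y" z] by (simp add: cinner_minus_left)

lemma cinner_diff_right: "cinner x (y - z) = cinner x y - cinner x z"
  using cinner_add_right[of x y "- z"] by (simp add: cinner_minus_right)

lemma scaleC_zero_left [simp]: "0 *\<^sub>C x = 0"
  using scaleR_scaleC[of 0 x] by simp

lemma scaleC_zero_right [simp]: "c *\<^sub>C 0 = 0"
  using scaleC_add_right[of c 0 0] by simp

lemma scaleC_minus_left: "(- c) *\<^sub>C x = - (c *\<^sub>C x)"
  using scaleC_add_left[of c "- c" x] by (simp add: add_eq_0_iff)

lemma scaleC_minus_right: "c *\<^sub>C (- x) = - (c *\<^sub>C x)"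
  using scaleC_add_right[of c x "- x"] by (simp add: add_eq_0_iff)

lemma scaleC_diff_right: "c *\<^sub>C (x - y) = c *\<^sub>C x - c *\<^sub>C y"
  using scaleC_add_right[of c x "- y"] by (simp add: scaleC_minus_right)

lemma scaleC_minus1_left [simp]: "(- 1) *\<^sub>C x = - x"
  by (simp add: scaleC_minus_left scaleC_one)

lemma cinner_self_Re: "Re (cinner x x) = (norm x)\<^sup>2"
proof -
  have "0 \<le> sqrt (Re (cinner x x))" by (metis norm_eq_sqrt_cinner norm_ge_zero)
  then show ?thesis using norm_eq_sqrt_cinner[of x] by simp
qed

lemma cinner_self: "cinner x x = complex_of_real ((norm x)\<^sup>2)"
proof -
  have "Im (cinner x x) = Im (cnj (cinner x x))" using cinner_commute[of x x] by simp
  then show ?thesis by (simp add: complex_eq_iff cinner_self_Re)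
qed

lemma cinner_self_eq_0 [simp]: "cinner x x = 0 \<longleftrightarrow> x = 0"
  by (simp add: cinner_self)

lemma Re_cinner_commute: "Re (cinner y x) = Re (cinner x y)"
  by (subst cinner_commute) simp

lemma cinner_eq_0_commute: "cinner y x = 0 \<longleftrightarrow> cinner x y = 0"
  by (subst cinner_commute) simp

lemma cinner_scaleR_left: "cinner (r *\<^sub>R x) y = complex_of_real r * cinner x y"
  by (simp add: scaleR_scaleC cinner_scaleC_left)

lemma cinner_scaleR_right: "cinner x (r *\<^sub>R y) = complex_of_real r * cinner x y"
  by (simp add: scaleR_scaleC cinner_scaleC_right)

lemma norm_scaleC: "norm (c *\<^sub>C x) = cmod c * norm x"
proof -
  have "(norm (c *\<^sub>C x))\<^sup>2 = Re ((c * cnj c) * cinner x x)"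
    by (simp flip: cinner_self_Re add: cinner_scaleC_left cinner_scaleC_right ac_simps)
  also have "\<dots> = (cmod c * norm x)\<^sup>2"
    by (simp only: complex_norm_square[symmetric] cinner_self) (simp add: power_mult_distrib)
  finally show ?thesis by (simp add: power2_eq_iff_nonneg)
qed

lemma Re_cinner_le: "Re (cinner x y) \<le> norm x * norm y"
proof (cases "x = 0 \<or> y = 0")
  case True
  then show ?thesis by auto
next
  case False
  let ?a = "norm x" and ?b = "norm y"
  have ab: "?a > 0" "?b > 0" using False by auto
  have "0 \<le> Re (cinner (?b *\<^sub>R x - ?a *\<^sub>R y) (?b *\<^sub>R x - ?a *\<^sub>R y))"
    by (simp add: cinner_self_Re)
  also have "\<dots> = 2 * (?a * ?b) * (?a * ?b - Re (cinner x y))"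
    by (simp add: cinner_diff_left cinner_diff_right cinner_scaleR_left cinner_scaleR_right
        cinner_self_Re Re_cinner_commute[of y x] algebra_simps power2_eq_square)
  finally have "0 \<le> (2 * (?a * ?b)) * (?a * ?b - Re (cinner x y))" .
  then show ?thesis using mult_pos_pos[OF ab] by (simp add: zero_le_mult_iff)
qed

lemma cinner_Cauchy_Schwarz: "cmod (cinner x y) \<le> norm x * norm y"
proof (cases "cinner x y = 0")
  case True
  then show ?thesis by simp
next
  case False
  \<comment> \<open>Rotate \<open>y\<close> by a unimodular \<open>c\<close> so that the inner product becomes real and nonnegative.\<close>
  define c where "c = cnj (cinner x y) / complex_of_real (cmod (cinner x y))"
  have "cmod c = 1" using False by (simp add: c_def norm_divide)
  have "c * cinner x y = complex_of_real (cmod (cinner x y))"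
    using False complex_norm_square[of "cinner x y"] by (simp add: c_def power2_eq_square field_simps)
  then have "cmod (cinner x y) = Re (cinner x (c *\<^sub>C y))" by (simp add: cinner_scaleC_right)
  also have "\<dots> \<le> norm x * norm y"
    using Re_cinner_le[of x "c *\<^sub>C y"] \<open>cmod c = 1\<close> by (simp add: norm_scaleC)
  finally show ?thesis .
qed

lemma parallelogram_law:
  fixes x y :: "'a::complex_inner"
  shows "(norm (x + y))\<^sup>2 + (norm (x - y))\<^sup>2 = 2 * (norm x)\<^sup>2 + 2 * (norm y)\<^sup>2"
proof -
  have "Re (cinner (x + y) (x + y)) + Re (cinner (x - y) (x - y)) = 2 * Re (cinner x x) + 2 * Re (cinner y y)"
    by (simp add: cinner_add_left cinner_add_right cinner_diff_left cinner_diff_right)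
  then show ?thesis by (simp add: cinner_self_Re)
qed

lemma pythagoras:
  assumes "cinner x y = 0"
  shows "(norm (x + y))\<^sup>2 = (norm x)\<^sup>2 + (norm y)\<^sup>2"
proof -
  have "Re (cinner (x + y) (x + y)) = Re (cinner x x) + Re (cinner y y)"
    using assms cinner_eq_0_commute[of y x] by (simp add: cinner_add_left cinner_add_right)
  then show ?thesis by (simp add: cinner_self_Re)
qed

instantiation prod :: (complex_inner, complex_inner) complex_inner
begin

definition scaleC_prod_def: "c *\<^sub>C p = (c *\<^sub>C fst p, c *\<^sub>C snd p)"

definition cinner_prod_def: "cinner p q = cinner (fst p) (fst q) + cinner (snd p) (snd q)"

instance
proof
  fix b c :: complex and x y z :: "'a \<times> 'b" and r :: real
  show "c *\<^sub>C (x + y) = c *\<^sub>C x + c *\<^sub>C y" by (simp add: scaleC_prod_def scaleC_add_right)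
  show "(b + c) *\<^sub>C x = b *\<^sub>C x + c *\<^sub>C x" by (simp add: scaleC_prod_def scaleC_add_left)
  show "b *\<^sub>C c *\<^sub>C x = (b * c) *\<^sub>C x" by (simp add: scaleC_prod_def scaleC_scaleC)
  show "1 *\<^sub>C x = x" by (simp add: scaleC_prod_def scaleC_one)
  show "r *\<^sub>R x = complex_of_real r *\<^sub>C x" by (simp add: scaleC_prod_def scaleR_scaleC prod_eq_iff)
  show "cinner x y = cnj (cinner y x)"
    by (simp add: cinner_prod_def cinner_commute[of "fst x"] cinner_commute[of "snd x"])
  show "cinner (x + y) z = cinner x z + cinner y z" by (simp add: cinner_prod_def cinner_add_left)
  show "cinner (c *\<^sub>C x) y = cnj c * cinner x y"
    by (simp add: cinner_prod_def scaleC_prod_def cinner_scaleC_left algebra_simps)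
  show "norm x = sqrt (Re (cinner x x))" by (simp add: cinner_prod_def norm_prod_def cinner_self_Re)
qed

end

instance prod :: (chilbert_space, chilbert_space) chilbert_space ..

lemma scaleC_Pair [simp]: "c *\<^sub>C (x, y) = (c *\<^sub>C x, c *\<^sub>C y)"
  by (simp add: scaleC_prod_def)

lemma fst_scaleC [simp]: "fst (c *\<^sub>C p) = c *\<^sub>C fst p"
  by (simp add: scaleC_prod_def)

lemma snd_scaleC [simp]: "snd (c *\<^sub>C p) = c *\<^sub>C snd p"
  by (simp add: scaleC_prod_def)

lemma cinner_Pair [simp]: "cinner (x, y) (x', y') = cinner x x' + cinner y y'"
  by (simp add: cinner_prod_def)

lemma norm_Pair_sq: "(norm (x, y))\<^sup>2 = (norm x)\<^sup>2 + (norm y)\<^sup>2"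
  by (simp add: norm_prod_def)

lemma bounded_bilinear_cinner: "bounded_bilinear (cinner :: 'a::complex_inner \<Rightarrow> 'a \<Rightarrow> complex)"
proof
  fix x x' y y' :: 'a and r :: real
  show "cinner (x + x') y = cinner x y + cinner x' y" by (rule cinner_add_left)
  show "cinner x (y + y') = cinner x y + cinner x y'" by (rule cinner_add_right)
  show "cinner (r *\<^sub>R x) y = r *\<^sub>R cinner x y" by (simp add: cinner_scaleR_left scaleR_conv_of_real)
  show "cinner x (r *\<^sub>R y) = r *\<^sub>R cinner x y" by (simp add: cinner_scaleR_right scaleR_conv_of_real)
  show "\<exists>K. \<forall>x y :: 'a. norm (cinner x y) \<le> norm x * norm y * K"
    by (rule exI[of _ 1]) (simp add: cinner_Cauchy_Schwarz)
qed

lemma bounded_linear_scaleC: "bounded_linear (\<lambda>x::'a::complex_inner. c *\<^sub>C x)"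
proof
  fix x y :: 'a and r :: real
  show "c *\<^sub>C (x + y) = c *\<^sub>C x + c *\<^sub>C y" by (rule scaleC_add_right)
  show "c *\<^sub>C (r *\<^sub>R x) = r *\<^sub>R (c *\<^sub>C x)" by (simp add: scaleR_scaleC scaleC_scaleC mult.commute)
  show "\<exists>K. \<forall>x::'a. norm (c *\<^sub>C x) \<le> norm x * K"
    by (rule exI[of _ "cmod c"]) (simp add: norm_scaleC mult.commute)
qed

lemmas tendsto_scaleC [tendsto_intros] = bounded_linear.tendsto[OF bounded_linear_scaleC]
lemmas tendsto_cinner [tendsto_intros] = bounded_bilinear.tendsto[OF bounded_bilinear_cinner]
lemmas continuous_on_cinner [continuous_intros] = bounded_bilinear.continuous_on[OF bounded_bilinear_cinner]
section \<open>Closed subspaces and orthogonal projection\<close>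

definition csubspace :: "'a::complex_inner set \<Rightarrow> bool" where
  "csubspace V \<longleftrightarrow> 0 \<in> V \<and> (\<forall>x\<in>V. \<forall>y\<in>V. x + y \<in> V) \<and> (\<forall>c. \<forall>x\<in>V. c *\<^sub>C x \<in> V)"

lemma csubspace_0: "csubspace V \<Longrightarrow> 0 \<in> V"
  by (simp add: csubspace_def)

lemma csubspace_add: "csubspace V \<Longrightarrow> x \<in> V \<Longrightarrow> y \<in> V \<Longrightarrow> x + y \<in> V"
  by (simp add: csubspace_def)

lemma csubspace_scaleC: "csubspace V \<Longrightarrow> x \<in> V \<Longrightarrow> c *\<^sub>C x \<in> V"
  by (simp add: csubspace_def)

lemma csubspace_diff: "csubspace V \<Longrightarrow> x \<in> V \<Longrightarrow> y \<in> V \<Longrightarrow> x - y \<in> V"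
  using csubspace_add[of V x "- y"] csubspace_scaleC[of V y "- 1"] by simp

lemma csubspace_scaleR: "csubspace V \<Longrightarrow> x \<in> V \<Longrightarrow> r *\<^sub>R x \<in> V"
  by (simp add: scaleR_scaleC csubspace_scaleC)

lemma csubspace_Int: "csubspace A \<Longrightarrow> csubspace B \<Longrightarrow> csubspace (A \<inter> B)"
  by (simp add: csubspace_def)

lemma closure_csubspace:
  assumes "csubspace S"
  shows "csubspace (closure S)"
proof -
  have "x + y \<in> closure S" if xy: "x \<in> closure S" "y \<in> closure S" for x y
  proof -
    obtain a b where "\<forall>n. a n \<in> S" "a \<longlonglongrightarrow> x" "\<forall>n. b n \<in> S" "b \<longlonglongrightarrow> y"
      using xy unfolding closure_sequential by metis
    then show ?thesis unfolding closure_sequential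
      by (intro exI[of _ "\<lambda>n. a n + b n"]) (auto intro: tendsto_intros csubspace_add[OF assms])
  qed
  moreover have "c *\<^sub>C x \<in> closure S" if x: "x \<in> closure S" for x c
  proof -
    obtain a where "\<forall>n. a n \<in> S" "a \<longlonglongrightarrow> x"
      using x unfolding closure_sequential by metis
    then show ?thesis unfolding closure_sequential
      by (intro exI[of _ "\<lambda>n. c *\<^sub>C a n"]) (auto intro: tendsto_intros csubspace_scaleC[OF assms])
  qed
  ultimately show ?thesis
    using csubspace_0[OF assms] closure_subset[of S] by (auto simp: csubspace_def)
qed

definition orth :: "'a::complex_inner set \<Rightarrow> 'a set" where
  "orth S = {x. \<forall>s\<in>S. cinner s x = 0}"

lemma csubspace_orth: "csubspace (orth S)"
  by (simp add: csubspace_def orth_def cinner_add_right cinner_scaleC_right)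

lemma closed_orth: "closed (orth S)"
proof -
  have "orth S = (\<Inter>s\<in>S. {x. cinner s x = 0})" by (auto simp: orth_def)
  then show ?thesis by (auto intro!: closed_Collect_eq continuous_intros)
qed

lemma norm_diff_scaleR_sq:
  "(norm (q - s *\<^sub>R w))\<^sup>2 = (norm q)\<^sup>2 - 2 * s * Re (cinner w q) + s\<^sup>2 * (norm w)\<^sup>2"
proof -
  have "(norm (q - s *\<^sub>R w))\<^sup>2
      = Re (cinner q q) - s * Re (cinner q w) - s * Re (cinner w q) + s * s * Re (cinner w w)"
    by (simp flip: cinner_self_Re add: cinner_diff_left cinner_diff_right cinner_scaleR_left
        cinner_scaleR_right algebra_simps)
  then show ?thesis by (simp add: Re_cinner_commute[of q w] cinner_self_Re power2_eq_square)
qed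

lemma Re_cinner_eq_0_if_minimal:
  assumes "\<And>s::real. norm q \<le> norm (q - s *\<^sub>R w)"
  shows "Re (cinner w q) = 0"
proof (cases "w = 0")
  case True
  then show ?thesis by simp
next
  case False
  define r where "r = Re (cinner w q)"
  define n where "n = (norm w)\<^sup>2"
  have n: "n > 0" using False by (simp add: n_def)
  have "(norm q)\<^sup>2 \<le> (norm (q - (r / n) *\<^sub>R w))\<^sup>2"
    using assms[of "r / n"] by (simp add: power_mono)
  also have "\<dots> = (norm q)\<^sup>2 - 2 * (r / n) * r + (r / n)\<^sup>2 * n"
    by (simp add: norm_diff_scaleR_sq r_def n_def)
  also have "\<dots> = (norm q)\<^sup>2 - r\<^sup>2 / n"
    using n by (simp add: field_simps power2_eq_square)
  finally have "r\<^sup>2 / n \<le> 0" by simp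
  then show ?thesis using n by (simp add: r_def divide_le_0_iff)
qed

lemma cinner_eq_0_if_best_approximation:
  assumes "csubspace V" "\<And>w. w \<in> V \<Longrightarrow> norm q \<le> norm (q - w)" "v \<in> V"
  shows "cinner v q = 0"
proof -
  have "Re (cinner v q) = 0"
    by (rule Re_cinner_eq_0_if_minimal) (use assms csubspace_scaleR in blast)
  moreover have "Re (cinner (\<i> *\<^sub>C v) q) = 0"
    by (rule Re_cinner_eq_0_if_minimal) (use assms csubspace_scaleR csubspace_scaleC in blast)
  then have "Im (cinner v q) = 0" by (simp add: cinner_scaleC_left)
  ultimately show ?thesis by (simp add: complex_eq_iff)
qed

text \<open>The parallelogram law bounds the distance of two almost minimising points by the gap
  of their distances to \<open>x\<close> above the infimum \<open>d\<close>.\<close>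

lemma minimizing_sequence_Cauchy:
  assumes V: "csubspace V" and v: "\<And>n. v n \<in> V"
    and d: "0 \<le> d" "\<And>w. w \<in> V \<Longrightarrow> d \<le> norm (x - w)"
    and v_min: "\<And>n. (norm (x - v n))\<^sup>2 < d\<^sup>2 + 1 / Suc n"
  shows "Cauchy v"
proof -
  have close: "(norm (v n - v k))\<^sup>2 \<le> 2 / Suc n + 2 / Suc k" for n k
  proof -
    have mid: "(1/2::real) *\<^sub>R (v n + v k) \<in> V"
      using V v by (simp add: csubspace_scaleR csubspace_add)
    have "(x - v n) + (x - v k) = (2::real) *\<^sub>R (x - (1/2::real) *\<^sub>R (v n + v k))"
      by (simp add: algebra_simps scaleR_2)
    then have "2 * d \<le> norm ((x - v n) + (x - v k))" using d(2)[OF mid] by simp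
    then have "(2 * d)\<^sup>2 \<le> (norm ((x - v n) + (x - v k)))\<^sup>2"
      using d(1) by (intro power_mono) auto
    moreover have "(norm ((x - v n) + (x - v k)))\<^sup>2 + (norm (v n - v k))\<^sup>2
        = 2 * (norm (x - v n))\<^sup>2 + 2 * (norm (x - v k))\<^sup>2"
      using parallelogram_law[of "x - v n" "x - v k"] by (simp add: norm_minus_commute)
    ultimately show ?thesis using v_min[of n] v_min[of k] by (simp add: power_mult_distrib)
  qed
  show "Cauchy v"
  proof (rule CauchyI)
    fix e :: real assume e: "0 < e"
    obtain N :: nat where N: "4 / e\<^sup>2 < N" using reals_Archimedean2 by blast
    then have "4 / e\<^sup>2 < Suc N" by simp
    then have small: "4 / Suc N < e\<^sup>2" using e by (simp add: field_simps)
    have bound: "2 / Suc k \<le> 2 / Suc N" if "N \<le> k" for k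
      using that by (simp add: frac_le)
    have "norm (v k - v n) < e" if "N \<le> k" "N \<le> n" for k n
    proof -
      have "(norm (v k - v n))\<^sup>2 < e\<^sup>2"
        using close[of k n] bound[OF that(1)] bound[OF that(2)] small by linarith
      then show ?thesis using e by (auto intro: power_less_imp_less_base)
    qed
    then show "\<exists>M. \<forall>k\<ge>M. \<forall>n\<ge>M. norm (v k - v n) < e" by blast
  qed
qed

lemma best_approximation_exists:
  fixes x :: "'a::chilbert_space"
  assumes V: "csubspace V" "closed V"
  shows "\<exists>p\<in>V. \<forall>w\<in>V. norm (x - p) \<le> norm (x - w)"
proof -
  define d where "d = Inf ((\<lambda>v. norm (x - v)) ` V)"
  have ne: "(\<lambda>v. norm (x - v)) ` V \<noteq> {}" using csubspace_0[OF V(1)] by auto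
  have bdd: "bdd_below ((\<lambda>v. norm (x - v)) ` V)" by (rule bdd_belowI[of _ 0]) auto
  have d_le: "d \<le> norm (x - w)" if "w \<in> V" for w
    unfolding d_def using bdd that by (simp add: cInf_lower)
  have d0: "0 \<le> d" unfolding d_def using ne by (auto intro!: cInf_greatest)
  have "\<forall>n. \<exists>v. v \<in> V \<and> (norm (x - v))\<^sup>2 < d\<^sup>2 + 1 / Suc n"
  proof
    fix n :: nat
    have "d < sqrt (d\<^sup>2 + 1 / Suc n)" by (rule real_less_rsqrt) simp
    then obtain v where v: "v \<in> V" "norm (x - v) < sqrt (d\<^sup>2 + 1 / Suc n)"
      using cInf_lessD[OF ne, of "sqrt (d\<^sup>2 + 1 / Suc n)"] unfolding d_def by blast
    have "(norm (x - v))\<^sup>2 < (sqrt (d\<^sup>2 + 1 / Suc n))\<^sup>2"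
      by (rule power_strict_mono) (use v in auto)
    also have "\<dots> = d\<^sup>2 + 1 / Suc n" by (rule real_sqrt_pow2) simp
    finally show "\<exists>v. v \<in> V \<and> (norm (x - v))\<^sup>2 < d\<^sup>2 + 1 / Suc n" using v(1) by blast
  qed
  from choice[OF this] obtain v where "\<forall>n. v n \<in> V \<and> (norm (x - v n))\<^sup>2 < d\<^sup>2 + 1 / Suc n"
    by blast
  then have v: "\<And>n. v n \<in> V" "\<And>n. (norm (x - v n))\<^sup>2 < d\<^sup>2 + 1 / Suc n" by auto
  have "Cauchy v" by (rule minimizing_sequence_Cauchy[OF V(1) v(1) d0 d_le v(2)])
  then obtain p where p: "v \<longlonglongrightarrow> p" using Cauchy_convergent_iff convergent_def by blast
  have "p \<in> V" using closed_sequentially[OF V(2) v(1) p] .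
  have "(\<lambda>n. (norm (x - v n))\<^sup>2) \<longlonglongrightarrow> (norm (x - p))\<^sup>2"
    by (intro tendsto_intros p)
  moreover have "(\<lambda>n. d\<^sup>2 + 1 / Suc n) \<longlonglongrightarrow> d\<^sup>2 + 0"
    by (intro tendsto_intros LIMSEQ_Suc[OF lim_inverse_n'])
  ultimately have "(norm (x - p))\<^sup>2 \<le> d\<^sup>2 + 0"
    by (rule LIMSEQ_le) (use v(2) in \<open>auto intro: less_imp_le\<close>)
  then have "norm (x - p) \<le> d" using d0 by (auto intro: power2_le_imp_le)
  then show ?thesis using \<open>p \<in> V\<close> order.trans[OF _ d_le] by blast
qed

lemma orthogonal_projection_exists:
  fixes x :: "'a::chilbert_space"
  assumes V: "csubspace V" "closed V"
  shows "\<exists>p\<in>V. \<forall>v\<in>V. cinner v (x - p) = 0"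
proof -
  obtain p where p: "p \<in> V" "\<And>w. w \<in> V \<Longrightarrow> norm (x - p) \<le> norm (x - w)"
    using best_approximation_exists[OF V] by blast
  have "norm (x - p) \<le> norm ((x - p) - w)" if "w \<in> V" for w
    using p(2)[of "p + w"] csubspace_add[OF V(1) p(1) that] by (simp add: diff_diff_eq)
  then show ?thesis using p(1) by (blast intro: cinner_eq_0_if_best_approximation[OF V(1)])
qed

lemma eq_0_if_orth_dense:
  assumes "closure S = UNIV" "\<forall>s\<in>S. cinner s h = 0"
  shows "h = 0"
proof -
  have "h \<in> closure S" using assms(1) by simp
  then obtain a where a: "\<forall>n. a n \<in> S" "a \<longlonglongrightarrow> h"
    unfolding closure_sequential by blast
  have "(\<lambda>n. cinner (a n) h) \<longlonglongrightarrow> cinner h h" by (intro tendsto_intros a)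
  moreover have "(\<lambda>n. cinner (a n) h) = (\<lambda>n. 0)" using a assms(2) by auto
  ultimately have "cinner h h = 0" using LIMSEQ_unique tendsto_const by metis
  then show ?thesis by simp
qed

lemma dense_if_orth_eq_0:
  fixes S :: "'a::chilbert_space set"
  assumes "csubspace S" "\<And>h. \<forall>s\<in>S. cinner s h = 0 \<Longrightarrow> h = 0"
  shows "closure S = UNIV"
proof -
  have "x \<in> closure S" for x
  proof -
    obtain p where "p \<in> closure S" "\<forall>v\<in>closure S. cinner v (x - p) = 0"
      using orthogonal_projection_exists[OF closure_csubspace[OF assms(1)] closed_closure] by blast
    then have "x - p = 0" using assms(2) closure_subset by blast
    then show ?thesis using \<open>p \<in> closure S\<close> by simp
  qed
  then show ?thesis by auto
qed

section \<open>Riesz representation and Lax-Milgram\<close>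

definition antilinear_on :: "'a::complex_inner set \<Rightarrow> ('a \<Rightarrow> complex) \<Rightarrow> bool" where
  "antilinear_on V F \<longleftrightarrow> (\<forall>x\<in>V. \<forall>y\<in>V. F (x + y) = F x + F y) \<and> (\<forall>c. \<forall>x\<in>V. F (c *\<^sub>C x) = cnj c * F x)"

definition sesquilinear_on :: "'a::complex_inner set \<Rightarrow> ('a \<Rightarrow> 'a \<Rightarrow> complex) \<Rightarrow> bool" where
  "sesquilinear_on V s \<longleftrightarrow> (\<forall>u\<in>V. antilinear_on V (\<lambda>v. s v u))
     \<and> (\<forall>v\<in>V. \<forall>u\<in>V. \<forall>u'\<in>V. s v (u + u') = s v u + s v u')
     \<and> (\<forall>c. \<forall>v\<in>V. \<forall>u\<in>V. s v (c *\<^sub>C u) = c * s v u)"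

lemma antilinear_on_diff:
  assumes F: "antilinear_on V F" and V: "csubspace V" "x \<in> V" "y \<in> V"
  shows "F (x - y) = F x - F y"
proof -
  have "F x = F (x - y) + F y"
    using F csubspace_diff[OF V] V(3) unfolding antilinear_on_def by (metis diff_add_cancel)
  then show ?thesis by simp
qed

lemma antilinear_on_zero:
  assumes "antilinear_on V F" "csubspace V"
  shows "F 0 = 0"
  using antilinear_on_diff[OF assms csubspace_0 csubspace_0] assms(2) by simp

lemma clinear_on_diff:
  assumes f: "clinear_on V f" and V: "csubspace V" "x \<in> V" "y \<in> V"
  shows "f (x - y) = f x - f y"
proof -
  have "f x = f (x - y) + f y"
    using f csubspace_diff[OF V] V(3) unfolding clinear_on_def by (metis diff_add_cancel)
  then show ?thesis by simp
qed

lemma clinear_on_zero: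
  assumes "clinear_on V f" "csubspace V"
  shows "f 0 = 0"
  using clinear_on_diff[OF assms csubspace_0 csubspace_0] assms(2) by simp

lemma csubspace_image_clinear_on:
  assumes f: "clinear_on V f" and V: "csubspace V"
  shows "csubspace (f ` V)"
  unfolding csubspace_def
proof (intro conjI ballI allI)
  show "0 \<in> f ` V" using clinear_on_zero[OF f V] csubspace_0[OF V] by (metis image_eqI)
next
  fix x y assume "x \<in> f ` V" "y \<in> f ` V"
  then obtain u v where "u \<in> V" "v \<in> V" "x = f u" "y = f v" by blast
  then show "x + y \<in> f ` V"
    using f csubspace_add[OF V] by (auto simp: clinear_on_def intro!: image_eqI[of _ f "u + v"])
next
  fix c x assume "x \<in> f ` V"
  then obtain u where "u \<in> V" "x = f u" by blast
  then show "c *\<^sub>C x \<in> f ` V"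
    using f csubspace_scaleC[OF V] by (auto simp: clinear_on_def intro!: image_eqI[of _ f "c *\<^sub>C u"])
qed

lemma closed_kernel_antilinear_on:
  assumes V: "csubspace V" "closed V" and F: "antilinear_on V F"
    and bound: "\<forall>x\<in>V. cmod (F x) \<le> K * norm x"
  shows "closed {v\<in>V. F v = 0}"
  unfolding closed_sequential_limits
proof (intro allI impI)
  fix x l assume x: "(\<forall>n. x n \<in> {v\<in>V. F v = 0}) \<and> x \<longlonglongrightarrow> l"
  have l: "l \<in> V" using closed_sequentially[OF V(2), of x l] x by auto
  have "(\<lambda>n. K * norm (l - x n)) \<longlonglongrightarrow> K * norm (l - l)"
    by (intro tendsto_intros x[THEN conjunct2])
  moreover have "cmod (F l) \<le> K * norm (l - x n)" for n
  proof -
    have "x n \<in> V" "F (x n) = 0" using x by auto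
    then have "F l = F (l - x n)" using antilinear_on_diff[OF F V(1) l] by simp
    then show ?thesis using bound csubspace_diff[OF V(1) l \<open>x n \<in> V\<close>] by simp
  qed
  ultimately have "cmod (F l) \<le> 0" using LIMSEQ_le[OF tendsto_const] by force
  then show "l \<in> {v\<in>V. F v = 0}" using l by simp
qed

theorem riesz_representation:
  fixes F :: "'a::chilbert_space \<Rightarrow> complex"
  assumes V: "csubspace V" "closed V" and F: "antilinear_on V F"
    and bound: "\<forall>x\<in>V. cmod (F x) \<le> K * norm x"
  shows "\<exists>w\<in>V. \<forall>v\<in>V. F v = cinner v w"
proof (cases "\<forall>v\<in>V. F v = 0")
  case True
  then show ?thesis using csubspace_0[OF V(1)] by (intro bexI[of _ 0]) auto
next
  case False
  then obtain z where z: "z \<in> V" "F z \<noteq> 0" by blast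
  define N where "N = {v\<in>V. F v = 0}"
  have N: "csubspace N" "closed N"
    using closed_kernel_antilinear_on[OF V F bound] V(1) F antilinear_on_zero[OF F V(1)]
    by (auto simp: N_def csubspace_def antilinear_on_def)
  obtain p where p: "p \<in> N" "\<forall>v\<in>N. cinner v (z - p) = 0"
    using orthogonal_projection_exists[OF N] by blast
  define q where "q = z - p"
  have "p \<in> V" "F p = 0" using p(1) by (auto simp: N_def)
  then have q: "q \<in> V" "F q = F z"
    using antilinear_on_diff[OF F V(1) z(1)] csubspace_diff[OF V(1) z(1)] by (auto simp: q_def)
  then have "q \<noteq> 0" using z antilinear_on_zero[OF F V(1)] by auto
  \<comment> \<open>\<open>q\<close> spans the orthogonal complement of the kernel; rescale it to represent \<open>F\<close>.\<close>
  define w where "w = (F q / complex_of_real ((norm q)\<^sup>2)) *\<^sub>C q"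
  have "F v = cinner v w" if v: "v \<in> V" for v
  proof -
    define \<alpha> where "\<alpha> = cnj (F v / F q)"
    have \<alpha>q: "\<alpha> *\<^sub>C q \<in> V" using csubspace_scaleC[OF V(1) q(1)] .
    have "F (v - \<alpha> *\<^sub>C q) = 0"
      using antilinear_on_diff[OF F V(1) v \<alpha>q] F q z unfolding antilinear_on_def by (simp add: \<alpha>_def)
    then have "v - \<alpha> *\<^sub>C q \<in> N" using csubspace_diff[OF V(1) v \<alpha>q] by (simp add: N_def)
    then have "cinner (v - \<alpha> *\<^sub>C q) q = 0" using p(2) by (simp add: q_def)
    then have "cinner v q = cnj \<alpha> * cinner q q" by (simp add: cinner_diff_left cinner_scaleC_left)
    then have "cinner v q = (F v / F q) * complex_of_real ((norm q)\<^sup>2)" by (simp add: \<alpha>_def cinner_self)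
    then show ?thesis using \<open>q \<noteq> 0\<close> q z by (simp add: w_def cinner_scaleC_right field_simps)
  qed
  moreover have "w \<in> V" unfolding w_def using csubspace_scaleC[OF V(1) q(1)] .
  ultimately show ?thesis by blast
qed

lemma eq_if_cinner_eq:
  assumes "csubspace V" "w1 \<in> V" "w2 \<in> V" "\<forall>v\<in>V. cinner v w1 = cinner v w2"
  shows "w1 = w2"
proof -
  have "cinner (w1 - w2) (w1 - w2) = 0"
    using assms csubspace_diff[OF assms(1-3)] by (simp add: cinner_diff_right)
  then show ?thesis by simp
qed

lemma bounded_sesquilinear_representer:
  fixes s :: "'a::chilbert_space \<Rightarrow> 'a \<Rightarrow> complex"
  assumes V: "csubspace V" "closed V" and s: "sesquilinear_on V s"
    and bounded: "\<forall>v\<in>V. \<forall>u\<in>V. cmod (s v u) \<le> M * norm v * norm u"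
  obtains S where "clinear_on V S" "\<And>u. u \<in> V \<Longrightarrow> S u \<in> V"
    "\<And>u v. u \<in> V \<Longrightarrow> v \<in> V \<Longrightarrow> s v u = cinner v (S u)"
proof -
  have "\<exists>w\<in>V. \<forall>v\<in>V. s v u = cinner v w" if u: "u \<in> V" for u
    by (rule riesz_representation[OF V, of _ "M * norm u"])
       (use s bounded u in \<open>auto simp: sesquilinear_on_def ac_simps\<close>)
  then obtain S where S: "\<And>u. u \<in> V \<Longrightarrow> S u \<in> V \<and> (\<forall>v\<in>V. s v u = cinner v (S u))"
    by metis
  have "clinear_on V S"
    unfolding clinear_on_def
  proof (intro conjI ballI allI)
    fix u u' assume "u \<in> V" "u' \<in> V"
    then show "S (u + u') = S u + S u'"
      using S s csubspace_add[OF V(1)]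
      by (intro eq_if_cinner_eq[OF V(1)]) (auto simp: sesquilinear_on_def cinner_add_right)
  next
    fix c u assume "u \<in> V"
    then show "S (c *\<^sub>C u) = c *\<^sub>C S u"
      using S s csubspace_scaleC[OF V(1)]
      by (intro eq_if_cinner_eq[OF V(1)]) (auto simp: sesquilinear_on_def cinner_scaleC_right)
  qed
  then show ?thesis using that S by blast
qed

lemma closed_image_bounded_below:
  fixes S :: "'a::chilbert_space \<Rightarrow> 'b::complex_inner"
  assumes V: "csubspace V" "closed V" and S: "clinear_on V S"
    and upper: "\<forall>u\<in>V. norm (S u) \<le> M * norm u"
    and lower: "\<mu> > 0" "\<forall>u\<in>V. \<mu> * norm u \<le> norm (S u)"
  shows "closed (S ` V)"
  unfolding closed_sequential_limits
proof (intro allI impI)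
  fix y l assume y: "(\<forall>n. y n \<in> S ` V) \<and> y \<longlonglongrightarrow> l"
  then have "\<forall>n. \<exists>u. u \<in> V \<and> y n = S u" by blast
  from choice[OF this] obtain u where u: "\<And>n. u n \<in> V" "\<And>n. y n = S (u n)" by blast
  have S_diff: "S (u n - u k) = y n - y k" for n k
    using clinear_on_diff[OF S V(1) u(1) u(1)] u(2) by simp
  have "Cauchy u"
  proof (rule CauchyI)
    fix e :: real assume e: "0 < e"
    have "Cauchy y" using y convergent_Cauchy convergentI by blast
    then obtain N where N: "\<forall>n\<ge>N. \<forall>k\<ge>N. norm (y n - y k) < \<mu> * e"
      using Cauchy_iff[THEN iffD1, rule_format, of y "\<mu> * e"] e lower(1) by auto
    have "norm (u n - u k) < e" if "N \<le> n" "N \<le> k" for n k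
    proof -
      have "\<mu> * norm (u n - u k) \<le> norm (y n - y k)"
        using lower(2) csubspace_diff[OF V(1) u(1) u(1)] S_diff by metis
      also have "\<dots> < \<mu> * e" using N that by blast
      finally show ?thesis using lower(1) by simp
    qed
    then show "\<exists>N. \<forall>n\<ge>N. \<forall>k\<ge>N. norm (u n - u k) < e" by blast
  qed
  then obtain u0 where u0: "u \<longlonglongrightarrow> u0" using Cauchy_convergent_iff convergent_def by blast
  have "u0 \<in> V" using closed_sequentially[OF V(2) u(1) u0] .
  have "(\<lambda>n. M * norm (u n - u0)) \<longlonglongrightarrow> M * norm (u0 - u0)" by (intro tendsto_intros u0)
  moreover have "norm (y n - S u0) \<le> M * norm (u n - u0)" for n
    using upper csubspace_diff[OF V(1) u(1) \<open>u0 \<in> V\<close>] clinear_on_diff[OF S V(1) u(1) \<open>u0 \<in> V\<close>] u(2)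
    by metis
  ultimately have "(\<lambda>n. y n - S u0) \<longlonglongrightarrow> 0"
    using Lim_null_comparison[OF always_eventually, of "\<lambda>n. y n - S u0"] by force
  then have "y \<longlonglongrightarrow> S u0" by (simp add: LIM_zero_iff)
  then have "l = S u0" using y LIMSEQ_unique by blast
  then show "l \<in> S ` V" using \<open>u0 \<in> V\<close> by blast
qed

text \<open>The operator \<open>S\<close> representing the form is bounded below by coercivity, so its range is
  closed; a vector orthogonal to the range is \<open>0\<close> by coercivity again, so the Riesz representer
  of \<open>F\<close> lies in the range.\<close>

theorem lax_milgram:
  fixes s :: "'a::chilbert_space \<Rightarrow> 'a \<Rightarrow> complex"
  assumes V: "csubspace V" "closed V" and s: "sesquilinear_on V s"
    and bounded: "\<forall>v\<in>V. \<forall>u\<in>V. cmod (s v u) \<le> M * norm v * norm u"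
    and coercive: "\<mu> > 0" "\<forall>u\<in>V. \<mu> * (norm u)\<^sup>2 \<le> Re (s u u)"
    and F: "antilinear_on V F" "\<forall>x\<in>V. cmod (F x) \<le> K * norm x"
  shows "\<exists>u\<in>V. \<forall>v\<in>V. s v u = F v"
proof -
  obtain S where S: "clinear_on V S" "\<And>u. u \<in> V \<Longrightarrow> S u \<in> V"
    and s_S: "\<And>u v. u \<in> V \<Longrightarrow> v \<in> V \<Longrightarrow> s v u = cinner v (S u)"
    using bounded_sesquilinear_representer[OF V s bounded] by blast
  have lower: "\<mu> * norm u \<le> norm (S u)" if u: "u \<in> V" for u
  proof -
    have "\<mu> * (norm u)\<^sup>2 \<le> Re (cinner u (S u))" using coercive(2) s_S u by metis
    also have "\<dots> \<le> norm u * norm (S u)" by (rule Re_cinner_le)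
    finally show ?thesis by (cases "u = 0") (auto simp: power2_eq_square)
  qed
  have upper: "norm (S u) \<le> M * norm u" if u: "u \<in> V" for u
  proof -
    have "(norm (S u))\<^sup>2 = Re (s (S u) u)" using s_S S(2) u by (simp add: cinner_self_Re)
    also have "\<dots> \<le> M * norm (S u) * norm u"
      using bounded S(2) u complex_Re_le_cmod order_trans by metis
    finally show ?thesis
      using lower[OF u] coercive(1) by (cases "S u = 0") (auto simp: power2_eq_square mult_le_0_iff)
  qed
  have R: "csubspace (S ` V)" "closed (S ` V)"
    using csubspace_image_clinear_on[OF S(1) V(1)]
      closed_image_bounded_below[OF V S(1) _ coercive(1)] upper lower by auto
  obtain w where w: "w \<in> V" "\<forall>v\<in>V. F v = cinner v w"
    using riesz_representation[OF V F] by blast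
  obtain u where u: "u \<in> V" "\<forall>t\<in>S ` V. cinner t (w - S u) = 0"
    using orthogonal_projection_exists[OF R, of w] by blast
  define q where "q = w - S u"
  have "q \<in> V" unfolding q_def using csubspace_diff[OF V(1) w(1) S(2)[OF u(1)]] .
  then have "s q q = 0"
    using u(2) s_S cinner_eq_0_commute[of "S q" q] by (simp add: q_def)
  then have "\<mu> * (norm q)\<^sup>2 \<le> 0" using coercive(2) \<open>q \<in> V\<close> by force
  then have "q = 0" using coercive(1) by (simp add: mult_le_0_iff)
  then show ?thesis using u(1) w s_S by (auto simp: q_def)
qed

section \<open>Linear operators as graphs, and their adjoints\<close>

lemma clinear_op_csubspace:
  assumes "clinear_op T"
  shows "csubspace T"
  unfolding csubspace_def
proof (intro conjI ballI allI)
  show "0 \<in> T" using assms by (simp add: clinear_op_def zero_prod_def)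
next
  fix p q assume "p \<in> T" "q \<in> T"
  then show "p + q \<in> T" using assms unfolding clinear_op_def by (metis add_Pair prod.collapse)
next
  fix c p assume "p \<in> T"
  then show "c *\<^sub>C p \<in> T" using assms unfolding clinear_op_def by (metis scaleC_Pair prod.collapse)
qed

lemma clinear_op_if_csubspace:
  assumes "csubspace T" "\<And>y. (0, y) \<in> T \<Longrightarrow> y = 0"
  shows "clinear_op T"
  unfolding clinear_op_def
proof (intro conjI allI impI)
  show "(0, 0) \<in> T" using csubspace_0[OF assms(1)] by (simp add: zero_prod_def)
next
  fix x y x' y' assume "(x, y) \<in> T" "(x', y') \<in> T"
  from csubspace_add[OF assms(1) this] show "(x + x', y + y') \<in> T" by simp
next
  fix c x y assume "(x, y) \<in> T"
  from csubspace_scaleC[OF assms(1) this, of c] show "(c *\<^sub>C x, c *\<^sub>C y) \<in> T" by simp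
qed (use assms(2) in blast)

context
  fixes T :: "('a::complex_inner \<times> 'b::complex_inner) set"
  assumes T: "clinear_op T"
begin

lemma clinear_op_0: "(0, 0) \<in> T"
  using T by (simp add: clinear_op_def)

lemma clinear_op_add: "(x, y) \<in> T \<Longrightarrow> (x', y') \<in> T \<Longrightarrow> (x + x', y + y') \<in> T"
  using T by (simp add: clinear_op_def)

lemma clinear_op_scaleC: "(x, y) \<in> T \<Longrightarrow> (c *\<^sub>C x, c *\<^sub>C y) \<in> T"
  using T by (simp add: clinear_op_def)

lemma clinear_op_diff: "(x, y) \<in> T \<Longrightarrow> (x', y') \<in> T \<Longrightarrow> (x - x', y - y') \<in> T"
  using clinear_op_add[of x y "- x'" "- y'"] clinear_op_scaleC[of x' y' "- 1"] by simp

lemma clinear_op_Pair_0: "(0, y) \<in> T \<Longrightarrow> y = 0"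
  using T by (simp add: clinear_op_def)

lemma clinear_op_single_valued: "(x, y) \<in> T \<Longrightarrow> (x, y') \<in> T \<Longrightarrow> y = y'"
  using clinear_op_diff[of x y x y'] clinear_op_Pair_0 by force

lemma opapp_eqI: "(x, y) \<in> T \<Longrightarrow> opapp T x = y"
  unfolding opapp_def using clinear_op_single_valued by blast

lemma opdomI: "(x, y) \<in> T \<Longrightarrow> x \<in> opdom T"
  unfolding opdom_def by force

lemma opapp_in_graph: "x \<in> opdom T \<Longrightarrow> (x, opapp T x) \<in> T"
  unfolding opdom_def using opapp_eqI by force

lemma opdom_0: "0 \<in> opdom T"
  using opdomI clinear_op_0 by blast

lemma opdom_add: "x \<in> opdom T \<Longrightarrow> x' \<in> opdom T \<Longrightarrow> x + x' \<in> opdom T"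
  using opdomI clinear_op_add opapp_in_graph by blast

lemma opdom_diff: "x \<in> opdom T \<Longrightarrow> x' \<in> opdom T \<Longrightarrow> x - x' \<in> opdom T"
  using opdomI clinear_op_diff opapp_in_graph by blast

lemma opdom_scaleC: "x \<in> opdom T \<Longrightarrow> c *\<^sub>C x \<in> opdom T"
  using opdomI clinear_op_scaleC opapp_in_graph by blast

lemma opapp_add: "x \<in> opdom T \<Longrightarrow> x' \<in> opdom T \<Longrightarrow> opapp T (x + x') = opapp T x + opapp T x'"
  using opapp_eqI clinear_op_add opapp_in_graph by blast

lemma opapp_diff: "x \<in> opdom T \<Longrightarrow> x' \<in> opdom T \<Longrightarrow> opapp T (x - x') = opapp T x - opapp T x'"
  using opapp_eqI clinear_op_diff opapp_in_graph by blast

lemma opapp_scaleC: "x \<in> opdom T \<Longrightarrow> opapp T (c *\<^sub>C x) = c *\<^sub>C opapp T x"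
  using opapp_eqI clinear_op_scaleC opapp_in_graph by blast

lemma csubspace_opdom: "csubspace (opdom T)"
  unfolding csubspace_def using opdom_0 opdom_add opdom_scaleC by blast

end

lemma opapp_subset:
  assumes "clinear_op T" "clinear_op T0" "T0 \<subseteq> T" "x \<in> opdom T0"
  shows "opapp T x = opapp T0 x"
  using assms opapp_in_graph opapp_eqI by blast

lemma adjoint_iff: "(y, z) \<in> adjoint T \<longleftrightarrow> (\<forall>x w. (x, w) \<in> T \<longrightarrow> cinner w y = cinner x z)"
  by (simp add: adjoint_def)

lemma neg_op_iff:
  fixes T :: "('a \<times> 'b::group_add) set"
  shows "(x, y) \<in> neg_op T \<longleftrightarrow> (x, - y) \<in> T"
proof
  assume "(x, y) \<in> neg_op T"
  then obtain x' y' where "(x, y) = (x', - y')" "(x', y') \<in> T" unfolding neg_op_def by blast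
  then show "(x, - y) \<in> T" by simp
next
  assume "(x, - y) \<in> T"
  then have "(x, - (- y)) \<in> neg_op T" unfolding neg_op_def by blast
  then show "(x, y) \<in> neg_op T" by simp
qed

lemma csubspace_adjoint: "csubspace (adjoint T)"
  unfolding csubspace_def
proof (intro conjI ballI allI)
  show "0 \<in> adjoint T" by (simp add: zero_prod_def adjoint_def)
next
  fix p q assume "p \<in> adjoint T" "q \<in> adjoint T"
  then show "p + q \<in> adjoint T"
    by (cases p, cases q) (simp add: adjoint_def cinner_add_right)
next
  fix c p assume "p \<in> adjoint T"
  then show "c *\<^sub>C p \<in> adjoint T"
    by (cases p) (simp add: adjoint_def cinner_scaleC_right)
qed

lemma closed_adjoint: "closed (adjoint T)"
proof -
  have "adjoint T = (\<Inter>p\<in>T. {q. cinner (snd p) (fst q) - cinner (fst p) (snd q) = 0})"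
    unfolding adjoint_def by (auto, metis fst_conv snd_conv)
  then show ?thesis by (auto intro!: closed_Collect_eq continuous_intros)
qed

lemma clinear_op_adjoint:
  assumes "densely_defined T"
  shows "clinear_op (adjoint T)"
proof (rule clinear_op_if_csubspace[OF csubspace_adjoint])
  fix z assume "(0, z) \<in> adjoint T"
  then show "z = 0"
    using assms eq_0_if_orth_dense[of "opdom T" z]
    unfolding densely_defined_def adjoint_def opdom_def by force
qed

lemma csubspace_neg_op:
  assumes "csubspace T"
  shows "csubspace (neg_op T)"
  unfolding csubspace_def
proof (intro conjI ballI allI)
  show "0 \<in> neg_op T" using csubspace_0[OF assms] by (simp add: zero_prod_def neg_op_iff)
next
  fix p q assume "p \<in> neg_op T" "q \<in> neg_op T"
  then show "p + q \<in> neg_op T"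
    using csubspace_add[OF assms, of "(fst p, - snd p)" "(fst q, - snd q)"]
    by (cases p, cases q) (simp add: neg_op_iff)
next
  fix c p assume "p \<in> neg_op T"
  then show "c *\<^sub>C p \<in> neg_op T"
    using csubspace_scaleC[OF assms, of "(fst p, - snd p)" c]
    by (cases p) (simp add: neg_op_iff scaleC_minus_right)
qed

lemma closed_neg_op:
  fixes T :: "('a::real_normed_vector \<times> 'b::real_normed_vector) set"
  assumes "closed T"
  shows "closed (neg_op T)"
proof -
  have "neg_op T = (\<lambda>p. (fst p, - snd p)) -` T" by (auto simp: neg_op_iff)
  moreover have "continuous (at x) (\<lambda>p::'a \<times> 'b. (fst p, - snd p))" for x
    by (intro continuous_intros)
  ultimately show ?thesis using continuous_closed_vimage[OF assms] by metis
qed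

lemma clinear_op_neg_op:
  assumes "clinear_op T"
  shows "clinear_op (neg_op T)"
proof (rule clinear_op_if_csubspace[OF csubspace_neg_op[OF clinear_op_csubspace[OF assms]]])
  fix y assume "(0, y) \<in> neg_op T"
  then show "y = 0" using clinear_op_Pair_0[OF assms, of "- y"] by (simp add: neg_op_iff)
qed

text \<open>The residual \<open>q\<close> of \<open>(x, w)\<close> after projecting onto the graph \<open>T\<close> is orthogonal to
  \<open>T\<close>, which says exactly that its rotated copy \<open>(snd q, - fst q)\<close> lies in \<open>T*\<close>; pairing it
  with \<open>(x, w) \<in> T**\<close> gives \<open>q \<bottom> (x, w)\<close>.\<close>

lemma adjoint_adjoint_subset:
  fixes T :: "('a::chilbert_space \<times> 'b::chilbert_space) set"
  assumes "csubspace T" "closed T"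
  shows "adjoint (adjoint T) \<subseteq> T"
proof
  fix p assume p: "p \<in> adjoint (adjoint T)"
  obtain g where g: "g \<in> T" "\<forall>t\<in>T. cinner t (p - g) = 0"
    using orthogonal_projection_exists[OF assms] by blast
  define q where "q = p - g"
  have "(snd q, - fst q) \<in> adjoint T"
    unfolding adjoint_iff
  proof (intro allI impI)
    fix x w assume "(x, w) \<in> T"
    then have "cinner x (fst q) + cinner w (snd q) = 0" using g(2) q_def by (cases q) force
    then show "cinner w (snd q) = cinner x (- fst q)" by (simp add: cinner_minus_right add_eq_0_iff)
  qed
  then have "cinner (- fst q) (fst p) = cinner (snd q) (snd p)"
    using p by (cases p) (simp add: adjoint_iff)
  then have "cinner q p = 0" by (cases p, cases q) (simp add: cinner_minus_left add_eq_0_iff)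
  moreover have "cinner q g = 0" using g cinner_eq_0_commute[of g q] by (simp add: q_def)
  ultimately have "cinner q q = 0" by (simp add: q_def cinner_diff_right)
  then show "p \<in> T" using g(1) by (simp add: q_def)
qed

section \<open>Boundary spaces\<close>

lemma gip_eq_cinner_graph: "gip T v u = cinner (v, opapp T v) (u, opapp T u)"
  by (simp add: gip_def)

lemma gnorm_eq_norm_graph: "gnorm T u = norm (u, opapp T u)"
  by (simp add: gnorm_def gip_def norm_prod_def cinner_self_Re)

lemma eq_0_if_gip_self_eq_0: "gip T x x = 0 \<Longrightarrow> x = 0"
  by (simp add: gip_eq_cinner_graph del: cinner_Pair) (simp add: zero_prod_def)

lemma gip_diff_left:
  "clinear_op T \<Longrightarrow> x \<in> opdom T \<Longrightarrow> y \<in> opdom T \<Longrightarrow> gip T (x - y) z = gip T x z - gip T y z"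
  by (simp add: gip_def opapp_diff cinner_diff_left)

lemma gip_diff_right:
  "clinear_op T \<Longrightarrow> x \<in> opdom T \<Longrightarrow> y \<in> opdom T \<Longrightarrow> gip T z (x - y) = gip T z x - gip T z y"
  by (simp add: gip_def opapp_diff cinner_diff_right)

context
  fixes T T0 :: "('a::chilbert_space \<times> 'b::chilbert_space) set"
  assumes T: "clinear_op T" "closed T" and T0: "clinear_op T0" "closed T0" and sub: "T0 \<subseteq> T"
begin

lemma BD_iff_graph_orth: "u \<in> BD T T0 \<longleftrightarrow> u \<in> opdom T \<and> (u, opapp T u) \<in> orth T0"
proof -
  have "gip T v u = cinner (v, v') (u, opapp T u)" if "(v, v') \<in> T0" for v v'
    using that sub opapp_eqI[OF T(1)] by (auto simp: gip_def)
  then have "(\<forall>v \<in> opdom T0. gip T v u = 0) \<longleftrightarrow> (\<forall>h\<in>T0. cinner h (u, opapp T u) = 0)"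
    using opapp_in_graph[OF T0(1)] opdomI[OF T0(1)] by (metis prod.collapse)
  then show ?thesis by (simp add: BD_def orth_def)
qed

lemma graph_orth_BD:
  assumes "p \<in> T \<inter> orth T0"
  shows "fst p \<in> BD T T0" "snd p = opapp T (fst p)"
proof -
  show snd: "snd p = opapp T (fst p)" using assms opapp_eqI[OF T(1), of "fst p" "snd p"] by simp
  have "p = (fst p, opapp T (fst p))" using snd by (simp add: prod_eq_iff)
  then show "fst p \<in> BD T T0" using assms opdomI[OF T(1)] by (metis BD_iff_graph_orth IntD1 IntD2)
qed

lemma csubspace_graph_orth: "csubspace (T \<inter> orth T0)"
  by (intro csubspace_Int clinear_op_csubspace T csubspace_orth)

lemma closed_graph_orth: "closed (T \<inter> orth T0)"
  by (intro closed_Int T closed_orth)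

lemma csubspace_BD: "csubspace (BD T T0)"
proof -
  have "BD T T0 = fst ` (T \<inter> orth T0)"
  proof
    show "BD T T0 \<subseteq> fst ` (T \<inter> orth T0)"
    proof
      fix u assume "u \<in> BD T T0"
      then have "(u, opapp T u) \<in> T \<inter> orth T0" using BD_iff_graph_orth opapp_in_graph[OF T(1)] by auto
      then show "u \<in> fst ` (T \<inter> orth T0)" by (metis fst_conv image_eqI)
    qed
  qed (use graph_orth_BD in auto)
  moreover have "clinear_on (T \<inter> orth T0) fst" by (simp add: clinear_on_def)
  ultimately show ?thesis using csubspace_image_clinear_on csubspace_graph_orth by metis
qed

text \<open>\<open>projBD\<close> is defined by a \<open>THE\<close>; here existence comes from the orthogonal projection of
  the graph onto the closed subspace \<open>T \<inter> orth T0\<close>, uniqueness from definiteness of \<open>gip T\<close>.\<close>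

lemma projBD:
  assumes y: "y \<in> opdom T"
  shows "projBD T T0 y \<in> BD T T0" "\<forall>q\<in>BD T T0. gip T (y - projBD T T0 y) q = 0"
proof -
  define P where "P p \<longleftrightarrow> p \<in> BD T T0 \<and> (\<forall>q\<in>BD T T0. gip T (y - p) q = 0)" for p
  obtain g where g: "g \<in> T \<inter> orth T0" "\<forall>q\<in>T \<inter> orth T0. cinner q ((y, opapp T y) - g) = 0"
    using orthogonal_projection_exists[OF csubspace_graph_orth closed_graph_orth] by blast
  have g_BD: "fst g \<in> BD T T0" and g_snd: "snd g = opapp T (fst g)"
    using graph_orth_BD[OF g(1)] by auto
  have "P (fst g)"
    unfolding P_def
  proof (intro conjI ballI g_BD)
    fix q assume q: "q \<in> BD T T0"
    then have "cinner (q, opapp T q) ((y, opapp T y) - g) = 0"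
      using g(2) BD_iff_graph_orth opapp_in_graph[OF T(1)] by blast
    moreover have "(y, opapp T y) - g = (y - fst g, opapp T (y - fst g))"
      using opapp_diff[OF T(1) y] g_BD by (simp add: BD_def prod_eq_iff g_snd)
    ultimately show "gip T (y - fst g) q = 0"
      by (simp add: gip_eq_cinner_graph cinner_eq_0_commute del: cinner_Pair)
  qed
  moreover have "p = p'" if "P p" "P p'" for p p'
  proof -
    have "p \<in> opdom T" "p' \<in> opdom T" "p' - p \<in> BD T T0"
      using that csubspace_diff[OF csubspace_BD] by (auto simp: P_def BD_def)
    then have "gip T (p' - p) (p' - p) = 0"
      using that gip_diff_left[OF T(1), of "y - p" "y - p'" "p' - p"] opdom_diff[OF T(1)] y
      by (simp add: P_def)
    then show ?thesis using eq_0_if_gip_self_eq_0 by force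
  qed
  ultimately have "P (projBD T T0 y)"
    unfolding projBD_def P_def[symmetric] by (metis theI)
  then show "projBD T T0 y \<in> BD T T0" "\<forall>q\<in>BD T T0. gip T (y - projBD T T0 y) q = 0"
    by (auto simp: P_def)
qed

text \<open>The remainder \<open>z = y - projBD y\<close> is graph-orthogonal to \<open>BD\<close>; projecting its graph onto
  \<open>T0\<close> leaves a residual in \<open>T \<inter> orth T0\<close> that is orthogonal to itself.\<close>

lemma diff_projBD_in_opdom:
  assumes y: "y \<in> opdom T"
  shows "y - projBD T T0 y \<in> opdom T0"
proof -
  define z where "z = y - projBD T T0 y"
  have z: "z \<in> opdom T" "\<forall>q\<in>BD T T0. gip T z q = 0"
    using projBD[OF y] opdom_diff[OF T(1) y] by (auto simp: z_def BD_def)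
  obtain h where h: "h \<in> T0" "\<forall>p\<in>T0. cinner p ((z, opapp T z) - h) = 0"
    using orthogonal_projection_exists[OF clinear_op_csubspace[OF T0(1)] T0(2)] by blast
  define r where "r = (z, opapp T z) - h"
  have "r \<in> T \<inter> orth T0"
    using opapp_in_graph[OF T(1) z(1)] h sub clinear_op_csubspace[OF T(1)]
    by (auto simp: r_def orth_def intro: csubspace_diff)
  then have "cinner (z, opapp T z) r = 0"
    using z(2) graph_orth_BD[of r] by (cases r) (simp add: gip_eq_cinner_graph del: cinner_Pair)
  moreover have "cinner h r = 0" using h by (simp add: r_def)
  ultimately have "cinner r r = 0"
    by (simp add: r_def cinner_diff_left)
  then have "(z, opapp T z) \<in> T0" using h(1) by (simp add: r_def)
  then show ?thesis using opdomI[OF T0(1)] by (simp add: z_def)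
qed

end

section \<open>Sectorial and self-adjoint operators\<close>

lemma in_sector_0_arctan:
  assumes "0 < Re z" "\<bar>Im z\<bar> \<le> K * Re z"
  shows "z \<in> sector 0 (arctan K)"
proof -
  have "- K \<le> Im z / Re z" "Im z / Re z \<le> K"
    using assms by (simp_all add: pos_divide_le_eq pos_le_divide_eq)
  then have "arctan (- K) \<le> arctan (Im z / Re z)" "arctan (Im z / Re z) \<le> arctan K"
    by (simp_all only: arctan_le_iff)
  then have "\<bar>arctan (Im z / Re z)\<bar> \<le> arctan K" unfolding arctan_minus by linarith
  then show ?thesis using arg_conv_arctan[OF assms(1)] by (simp add: sector_def)
qed

lemma m_sectorialI:
  assumes "clinear_op T" "0 \<le> \<theta>" "\<theta> < pi / 2" "numerical_range T \<subseteq> sector 0 \<theta>"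
    and surj: "\<And>f. \<exists>x y. (x, y) \<in> T \<and> y + x = f"
  shows "m_sectorial T"
proof -
  have "snd ` shift_op T (complex_of_real (- 1)) = UNIV"
  proof (intro set_eqI iffI UNIV_I)
    fix f
    obtain x y where "(x, y) \<in> T" "y + x = f" using surj by blast
    then have "(x, f) \<in> shift_op T (complex_of_real (- 1))"
      unfolding shift_op_def by force
    then show "f \<in> snd ` shift_op T (complex_of_real (- 1))" by force
  qed
  then show ?thesis unfolding m_sectorial_def using assms(1-4)
    by (intro conjI exI[of _ "0::real"] exI[of _ \<theta>] exI[of _ "- 1::real"]) auto
qed

text \<open>A symmetric operator \<open>T\<close> with \<open>T + I\<close> surjective is self-adjoint: for \<open>(y, z) \<in> T*\<close>
  pick \<open>(x, t) \<in> T\<close> with \<open>t + x = z + y\<close>; then \<open>y - x\<close> is orthogonal to the range of \<open>T + I\<close>.\<close>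

lemma adjoint_subset_if_symmetric_surj:
  assumes sym: "T \<subseteq> adjoint T" and surj: "\<And>f. \<exists>x y. (x, y) \<in> T \<and> y + x = f"
  shows "adjoint T \<subseteq> T"
proof
  fix p assume p: "p \<in> adjoint T"
  obtain y z where yz: "p = (y, z)" by (cases p)
  obtain x t where xt: "(x, t) \<in> T" "t + x = z + y" using surj by blast
  have "cinner f (y - x) = 0" for f
  proof -
    obtain x' w where xw: "(x', w) \<in> T" "w + x' = f" using surj by blast
    have "cinner w y = cinner x' z" using p xw(1) by (simp add: yz adjoint_iff)
    moreover have "cinner w x = cinner x' t" using sym xt(1) xw(1) by (auto simp: adjoint_iff)
    ultimately have "cinner w (y - x) = cinner x' (z - t)" by (simp add: cinner_diff_right)
    also have "z - t = - (y - x)" using xt(2) by (simp add: algebra_simps)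
    finally have "cinner w (y - x) + cinner x' (y - x) = 0" by (simp only: cinner_minus_right) simp
    then show ?thesis unfolding xw(2)[symmetric] by (simp add: cinner_add_left)
  qed
  then have "y = x" using cinner_self_eq_0[of "y - x"] by simp
  then show "p \<in> T" using xt yz by simp
qed

lemma densely_defined_if_adjoint_subset:
  fixes T :: "('a::chilbert_space \<times> 'a) set"
  assumes "clinear_op T" "adjoint T \<subseteq> T"
  shows "densely_defined T"
  unfolding densely_defined_def
proof (rule dense_if_orth_eq_0[OF csubspace_opdom[OF assms(1)]])
  fix h assume "\<forall>s\<in>opdom T. cinner s h = 0"
  then have "(0, h) \<in> adjoint T" unfolding adjoint_iff using opdomI[OF assms(1)] by auto
  then show "h = 0" using assms clinear_op_Pair_0 by blast
qed

section \<open>The operator associated with a coercive form\<close>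

lemma ex_nonneg_bound:
  fixes f g :: "'a \<Rightarrow> real"
  assumes "\<exists>C. \<forall>x\<in>S. f x \<le> C * g x" "\<forall>x\<in>S. 0 \<le> g x"
  shows "\<exists>C\<ge>0. \<forall>x\<in>S. f x \<le> C * g x"
proof -
  obtain C where C: "\<forall>x\<in>S. f x \<le> C * g x" using assms(1) by blast
  have "\<forall>x\<in>S. f x \<le> max C 0 * g x"
    using C assms(2) by (meson max.cobounded1 mult_right_mono order_trans)
  then show ?thesis by (intro exI[of _ "max C 0"]) auto
qed

definition form_operator ::
    "'v set \<Rightarrow> ('v \<Rightarrow> 'v \<Rightarrow> complex) \<Rightarrow> ('v \<Rightarrow> 'h::complex_inner) \<Rightarrow> ('h \<times> 'h) set" where
  "form_operator V b j = {(j u, \<psi>) | u \<psi>. u \<in> V \<and> (\<forall>v\<in>V. cinner (j v) \<psi> = b v u)}"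

lemma form_operator_iff:
  "(\<phi>, \<psi>) \<in> form_operator V b j \<longleftrightarrow> (\<exists>u\<in>V. j u = \<phi> \<and> (\<forall>v\<in>V. cinner (j v) \<psi> = b v u))"
  by (auto simp: form_operator_def)

locale coercive_form =
  fixes V :: "'v::chilbert_space set" and b :: "'v \<Rightarrow> 'v \<Rightarrow> complex"
    and j :: "'v \<Rightarrow> 'h::chilbert_space"
  assumes V: "csubspace V" "closed V"
    and sesquilinear: "sesquilinear_on V b"
    and bounded: "\<exists>M. \<forall>v\<in>V. \<forall>u\<in>V. cmod (b v u) \<le> M * norm v * norm u"
    and coercive: "\<exists>\<mu>>0. \<forall>u\<in>V. \<mu> * (norm u)\<^sup>2 \<le> Re (b u u)"
    and j_linear: "clinear_on V j"
    and j_bounded: "\<exists>C. \<forall>u\<in>V. norm (j u) \<le> C * norm u"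
    and j_inj: "inj_on j V"
    and j_dense: "closure (j ` V) = UNIV"
begin

abbreviation A :: "('h \<times> 'h) set" where
  "A \<equiv> form_operator V b j"

lemma b_add_right: "v \<in> V \<Longrightarrow> u \<in> V \<Longrightarrow> u' \<in> V \<Longrightarrow> b v (u + u') = b v u + b v u'"
  using sesquilinear by (simp add: sesquilinear_on_def)

lemma b_scaleC_right: "v \<in> V \<Longrightarrow> u \<in> V \<Longrightarrow> b v (c *\<^sub>C u) = c * b v u"
  using sesquilinear by (simp add: sesquilinear_on_def)

lemma b_zero_right: "v \<in> V \<Longrightarrow> b v 0 = 0"
  using b_scaleC_right[OF _ csubspace_0[OF V(1)], of v 0] by simp

lemma b_bounded: "\<exists>M\<ge>0. \<forall>v\<in>V. \<forall>u\<in>V. cmod (b v u) \<le> M * norm v * norm u"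
  using ex_nonneg_bound[where f="\<lambda>(v, u). cmod (b v u)" and S="V \<times> V" and g="\<lambda>(v, u). norm v * norm u"] bounded
  by (simp add: mult.assoc)

lemma j_zero: "j 0 = 0"
  by (rule clinear_on_zero[OF j_linear V(1)])

lemma csubspace_form_operator: "csubspace A"
  unfolding csubspace_def zero_prod_def form_operator_iff
proof (intro conjI ballI allI)
  show "\<exists>u\<in>V. j u = 0 \<and> (\<forall>v\<in>V. cinner (j v) 0 = b v u)"
    using csubspace_0[OF V(1)] j_zero b_zero_right by auto
next
  fix p q assume p: "p \<in> A" and q: "q \<in> A"
  obtain u where u: "u \<in> V" "j u = fst p" "\<forall>v\<in>V. cinner (j v) (snd p) = b v u"
    using p by (cases p) (auto simp: form_operator_iff)
  obtain u' where u': "u' \<in> V" "j u' = fst q" "\<forall>v\<in>V. cinner (j v) (snd q) = b v u'"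
    using q by (cases q) (auto simp: form_operator_iff)
  have "u + u' \<in> V \<and> j (u + u') = fst (p + q) \<and> (\<forall>v\<in>V. cinner (j v) (snd (p + q)) = b v (u + u'))"
    using u u' csubspace_add[OF V(1)] j_linear b_add_right
    by (simp add: clinear_on_def cinner_add_right)
  then show "p + q \<in> A" by (cases "p + q") (auto simp: form_operator_iff)
next
  fix c p assume p: "p \<in> A"
  obtain u where u: "u \<in> V" "j u = fst p" "\<forall>v\<in>V. cinner (j v) (snd p) = b v u"
    using p by (cases p) (auto simp: form_operator_iff)
  have "c *\<^sub>C u \<in> V \<and> j (c *\<^sub>C u) = fst (c *\<^sub>C p) \<and> (\<forall>v\<in>V. cinner (j v) (snd (c *\<^sub>C p)) = b v (c *\<^sub>C u))"
    using u csubspace_scaleC[OF V(1)] j_linear b_scaleC_right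
    by (simp add: clinear_on_def cinner_scaleC_right)
  then show "c *\<^sub>C p \<in> A" by (cases "c *\<^sub>C p") (auto simp: form_operator_iff)
qed

lemma clinear_op_form_operator: "clinear_op A"
proof (rule clinear_op_if_csubspace[OF csubspace_form_operator])
  fix \<psi> assume "(0, \<psi>) \<in> A"
  then obtain u where u: "u \<in> V" "j u = 0" "\<forall>v\<in>V. cinner (j v) \<psi> = b v u"
    by (auto simp: form_operator_iff)
  have "u = 0" using j_inj u(1,2) j_zero csubspace_0[OF V(1)] by (metis inj_on_def)
  then have "\<forall>s\<in>j ` V. cinner s \<psi> = 0" using u(3) b_zero_right by auto
  then show "\<psi> = 0" by (rule eq_0_if_orth_dense[OF j_dense])
qed

lemma numerical_range_form_operator: "\<exists>\<theta>. 0 \<le> \<theta> \<and> \<theta> < pi / 2 \<and> numerical_range A \<subseteq> sector 0 \<theta>"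
proof -
  obtain \<mu> where \<mu>: "\<mu> > 0" "\<forall>u\<in>V. \<mu> * (norm u)\<^sup>2 \<le> Re (b u u)" using coercive by blast
  obtain M where M: "M \<ge> 0" "\<forall>v\<in>V. \<forall>u\<in>V. cmod (b v u) \<le> M * norm v * norm u"
    using b_bounded by blast
  have "z \<in> sector 0 (arctan (M / \<mu>))" if z: "z \<in> numerical_range A" for z
  proof -
    obtain \<phi> where \<phi>: "\<phi> \<in> opdom A" "norm \<phi> = 1" "z = cinner \<phi> (opapp A \<phi>)"
      using z unfolding numerical_range_def by blast
    then obtain u where u: "u \<in> V" "j u = \<phi>" "z = b u u"
      using opapp_in_graph[OF clinear_op_form_operator \<phi>(1)] by (auto simp: form_operator_iff)
    have "u \<noteq> 0" using \<phi>(2) u(2) j_zero by auto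
    then have Re: "0 < \<mu> * (norm u)\<^sup>2" "\<mu> * (norm u)\<^sup>2 \<le> Re z" using \<mu> u by auto
    have "\<bar>Im z\<bar> \<le> M * (norm u)\<^sup>2"
      using abs_Im_le_cmod[of z] M u by (auto simp: power2_eq_square mult.assoc intro: order_trans)
    also have "\<dots> = (M / \<mu>) * (\<mu> * (norm u)\<^sup>2)" using \<mu>(1) by simp
    also have "\<dots> \<le> (M / \<mu>) * Re z"
      using Re \<mu>(1) M(1) by (intro mult_left_mono) auto
    finally show ?thesis using Re by (intro in_sector_0_arctan) auto
  qed
  moreover have "0 \<le> arctan (M / \<mu>)" using M(1) \<mu>(1) by simp
  ultimately show ?thesis using arctan_ubound by blast
qed

text \<open>\<open>A + I\<close> is the operator of the coercive form \<open>b + (j \<cdot>, j \<cdot>)\<close>, so Lax-Milgram makes it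
  surjective.\<close>

lemma form_operator_plus_id_surj: "\<exists>\<phi> \<psi>. (\<phi>, \<psi>) \<in> A \<and> \<psi> + \<phi> = f"
proof -
  obtain \<mu> where \<mu>: "\<mu> > 0" "\<forall>u\<in>V. \<mu> * (norm u)\<^sup>2 \<le> Re (b u u)" using coercive by blast
  obtain M where M: "\<forall>v\<in>V. \<forall>u\<in>V. cmod (b v u) \<le> M * norm v * norm u" using bounded by blast
  obtain C where C: "\<forall>u\<in>V. norm (j u) \<le> C * norm u" using j_bounded by blast
  define s where "s v u = b v u + cinner (j v) (j u)" for v u
  have "\<exists>u\<in>V. \<forall>v\<in>V. s v u = cinner (j v) f"
  proof (rule lax_milgram[OF V, where M="M + C * C" and \<mu>=\<mu> and K="C * norm f"])
    show "sesquilinear_on V s"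
      using sesquilinear j_linear
      by (simp add: s_def sesquilinear_on_def antilinear_on_def clinear_on_def cinner_add_left
          cinner_add_right cinner_scaleC_left cinner_scaleC_right algebra_simps)
    show "\<forall>v\<in>V. \<forall>u\<in>V. cmod (s v u) \<le> (M + C * C) * norm v * norm u"
    proof (intro ballI)
      fix v u assume "v \<in> V" "u \<in> V"
      have "cmod (cinner (j v) (j u)) \<le> (C * norm v) * (C * norm u)"
        using cinner_Cauchy_Schwarz[of "j v" "j u"] C \<open>v \<in> V\<close> \<open>u \<in> V\<close>
        by (smt (verit) mult_mono norm_ge_zero)
      moreover have "cmod (b v u) \<le> M * norm v * norm u" using M \<open>v \<in> V\<close> \<open>u \<in> V\<close> by blast
      ultimately have "cmod (b v u) + cmod (cinner (j v) (j u)) \<le> (M + C * C) * norm v * norm u"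
        by (simp add: algebra_simps)
      then show "cmod (s v u) \<le> (M + C * C) * norm v * norm u"
        unfolding s_def by (rule order_trans[OF norm_triangle_ineq])
    qed
    show "\<forall>u\<in>V. \<mu> * (norm u)\<^sup>2 \<le> Re (s u u)"
      using \<mu>(2) by (simp add: s_def cinner_self_Re add_increasing2)
    show "antilinear_on V (\<lambda>v. cinner (j v) f)"
      using j_linear by (simp add: antilinear_on_def clinear_on_def cinner_add_left cinner_scaleC_left)
    show "\<forall>v\<in>V. cmod (cinner (j v) f) \<le> C * norm f * norm v"
    proof
      fix v assume "v \<in> V"
      have "cmod (cinner (j v) f) \<le> norm (j v) * norm f" by (rule cinner_Cauchy_Schwarz)
      also have "\<dots> \<le> C * norm v * norm f" using C \<open>v \<in> V\<close> by (simp add: mult_right_mono)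
      finally show "cmod (cinner (j v) f) \<le> C * norm f * norm v" by (simp add: ac_simps)
    qed
  qed (rule \<mu>(1))
  then obtain u where "u \<in> V" "\<forall>v\<in>V. cinner (j v) (f - j u) = b v u"
    by (auto simp: s_def cinner_diff_right algebra_simps)
  then show ?thesis by (intro exI[of _ "j u"] exI[of _ "f - j u"]) (auto simp: form_operator_iff)
qed

lemma m_sectorial_form_operator: "m_sectorial A"
proof -
  obtain \<theta> where "0 \<le> \<theta>" "\<theta> < pi / 2" "numerical_range A \<subseteq> sector 0 \<theta>"
    using numerical_range_form_operator by blast
  then show ?thesis
    using m_sectorialI[OF clinear_op_form_operator _ _ _ form_operator_plus_id_surj] by blast
qed

lemma form_operator_subset_adjoint:
  assumes hermitian: "\<forall>u\<in>V. \<forall>v\<in>V. b v u = cnj (b u v)"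
  shows "A \<subseteq> adjoint A"
proof safe
  fix \<phi> \<psi> assume "(\<phi>, \<psi>) \<in> A"
  then obtain u where u: "u \<in> V" "j u = \<phi>" "\<forall>v\<in>V. cinner (j v) \<psi> = b v u"
    by (auto simp: form_operator_iff)
  have "cinner \<psi>' \<phi> = cinner \<phi>' \<psi>" if A': "(\<phi>', \<psi>') \<in> A" for \<phi>' \<psi>'
  proof -
    obtain u' where u': "u' \<in> V" "j u' = \<phi>'" "\<forall>v\<in>V. cinner (j v) \<psi>' = b v u'"
      using A' by (auto simp: form_operator_iff)
    have "cinner \<psi>' \<phi> = cnj (cinner (j u) \<psi>')" using cinner_commute[of \<psi>' \<phi>] u(2) by simp
    also have "\<dots> = cnj (b u u')" using u(1) u'(3) by simp
    also have "\<dots> = b u' u" using hermitian[rule_format, OF u'(1) u(1)] by simp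
    also have "\<dots> = cinner \<phi>' \<psi>" using u(3) u'(1) by (simp flip: u'(2))
    finally show ?thesis .
  qed
  then show "(\<phi>, \<psi>) \<in> adjoint A" by (simp add: adjoint_iff)
qed

lemma selfadjoint_form_operator:
  assumes "\<forall>u\<in>V. \<forall>v\<in>V. b v u = cnj (b u v)"
  shows "selfadjoint_op A"
proof -
  have "adjoint A = A"
    using form_operator_subset_adjoint[OF assms]
      adjoint_subset_if_symmetric_surj[OF _ form_operator_plus_id_surj] by blast
  then show ?thesis
    using densely_defined_if_adjoint_subset[OF clinear_op_form_operator]
    by (simp add: selfadjoint_op_def)
qed

end

context
  fixes f :: "'a::complex_inner \<Rightarrow> 'b::complex_inner"
  assumes f: "bounded_clinear_op f"
begin

lemma bounded_clinear_op_add: "f (x + y) = f x + f y"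
  using f by (simp add: bounded_clinear_op_def clinear_on_def)

lemma bounded_clinear_op_scaleC: "f (c *\<^sub>C x) = c *\<^sub>C f x"
  using f by (simp add: bounded_clinear_op_def clinear_on_def)

lemma bounded_clinear_op_diff: "f (x - y) = f x - f y"
  using clinear_on_diff[of UNIV f x y] f by (simp add: bounded_clinear_op_def csubspace_def)

lemma bounded_clinear_op_bound: "\<exists>K\<ge>0. \<forall>x. norm (f x) \<le> K * norm x"
  using f ex_nonneg_bound[where f="\<lambda>x. norm (f x)" and S=UNIV and g=norm]
  by (auto simp: bounded_clinear_op_def mult.commute)

end

lemma coercive_Re_cinner:
  assumes "coercive f"
  shows "\<exists>\<mu>>0. \<forall>x. \<mu> * (norm x)\<^sup>2 \<le> Re (cinner x (f x))"
  using assms by (simp add: coercive_def Re_cinner_commute)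

definition diag_form :: "('a::complex_inner \<Rightarrow> 'a) \<Rightarrow> ('b::complex_inner \<Rightarrow> 'b)
    \<Rightarrow> 'a \<times> 'b \<Rightarrow> 'a \<times> 'b \<Rightarrow> complex" where
  "diag_form m a p q = cinner (fst p) (m (fst q)) + cinner (snd p) (a (snd q))"

context
  fixes m :: "'a::complex_inner \<Rightarrow> 'a" and a :: "'b::complex_inner \<Rightarrow> 'b"
  assumes m: "bounded_clinear_op m" "coercive m" and a: "bounded_clinear_op a" "coercive a"
begin

lemma sesquilinear_on_diag_form: "sesquilinear_on V (diag_form m a)"
  by (simp add: sesquilinear_on_def antilinear_on_def diag_form_def cinner_add_left cinner_add_right
      cinner_scaleC_left cinner_scaleC_right bounded_clinear_op_add[OF m(1)] bounded_clinear_op_add[OF a(1)]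
      bounded_clinear_op_scaleC[OF m(1)] bounded_clinear_op_scaleC[OF a(1)] algebra_simps)

lemma diag_form_add_right: "diag_form m a p (q + q') = diag_form m a p q + diag_form m a p q'"
  by (simp add: diag_form_def cinner_add_right bounded_clinear_op_add[OF m(1)]
      bounded_clinear_op_add[OF a(1)])

lemma diag_form_diff_right: "diag_form m a p (q - q') = diag_form m a p q - diag_form m a p q'"
  by (simp add: diag_form_def cinner_diff_right bounded_clinear_op_diff[OF m(1)]
      bounded_clinear_op_diff[OF a(1)])

lemma diag_form_bounded: "\<exists>M\<ge>0. \<forall>p q. cmod (diag_form m a p q) \<le> M * norm p * norm q"
proof -
  obtain K1 where K1: "K1 \<ge> 0" "\<forall>x. norm (m x) \<le> K1 * norm x"
    using bounded_clinear_op_bound[OF m(1)] by blast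
  obtain K2 where K2: "K2 \<ge> 0" "\<forall>y. norm (a y) \<le> K2 * norm y"
    using bounded_clinear_op_bound[OF a(1)] by blast
  have "cmod (diag_form m a p q) \<le> (K1 + K2) * norm p * norm q" for p q
  proof -
    have "cmod (diag_form m a p q) \<le> norm (fst p) * norm (m (fst q)) + norm (snd p) * norm (a (snd q))"
      unfolding diag_form_def
      by (rule order_trans[OF norm_triangle_ineq add_mono[OF cinner_Cauchy_Schwarz cinner_Cauchy_Schwarz]])
    also have "\<dots> \<le> norm p * (K1 * norm q) + norm p * (K2 * norm q)"
      using K1 K2 norm_fst_le[of "fst p" "snd p"] norm_fst_le[of "fst q" "snd q"]
        norm_snd_le[of "snd p" "fst p"] norm_snd_le[of "snd q" "fst q"]
      by (intro add_mono mult_mono) (auto intro: order_trans mult_left_mono)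
    finally show ?thesis by (simp add: algebra_simps)
  qed
  then show ?thesis using K1 K2 by (intro exI[of _ "K1 + K2"]) auto
qed

lemma diag_form_coercive: "\<exists>\<mu>>0. \<forall>p. \<mu> * (norm p)\<^sup>2 \<le> Re (diag_form m a p p)"
proof -
  obtain \<mu>1 where \<mu>1: "\<mu>1 > 0" "\<forall>x. \<mu>1 * (norm x)\<^sup>2 \<le> Re (cinner x (m x))"
    using coercive_Re_cinner[OF m(2)] by blast
  obtain \<mu>2 where \<mu>2: "\<mu>2 > 0" "\<forall>y. \<mu>2 * (norm y)\<^sup>2 \<le> Re (cinner y (a y))"
    using coercive_Re_cinner[OF a(2)] by blast
  have "min \<mu>1 \<mu>2 * (norm p)\<^sup>2 \<le> Re (diag_form m a p p)" for p
  proof -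
    have "min \<mu>1 \<mu>2 * (norm p)\<^sup>2 = min \<mu>1 \<mu>2 * (norm (fst p))\<^sup>2 + min \<mu>1 \<mu>2 * (norm (snd p))\<^sup>2"
      using norm_Pair_sq[of "fst p" "snd p"] by (simp add: algebra_simps)
    also have "\<dots> \<le> \<mu>1 * (norm (fst p))\<^sup>2 + \<mu>2 * (norm (snd p))\<^sup>2"
      by (intro add_mono mult_right_mono) auto
    also have "\<dots> \<le> Re (diag_form m a p p)"
      using \<mu>1 \<mu>2 by (simp add: diag_form_def add_mono)
    finally show ?thesis .
  qed
  then show ?thesis using \<mu>1 \<mu>2 by (intro exI[of _ "min \<mu>1 \<mu>2"]) auto
qed

end

lemma diag_form_hermitian:
  assumes "bounded_selfadjoint m" "bounded_selfadjoint a"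
  shows "diag_form m a p q = cnj (diag_form m a q p)"
  using assms cinner_commute[of "fst p" "m (fst q)"] cinner_commute[of "snd p" "a (snd q)"]
  by (simp add: diag_form_def bounded_selfadjoint_def)

section \<open>The Dirichlet problem\<close>

locale dirichlet_to_neumann =
  fixes G :: "('h0::chilbert_space \<times> 'h1::chilbert_space) set"
    and D :: "('h1 \<times> 'h0) set"
    and a :: "'h1 \<Rightarrow> 'h1"
    and m :: "'h0 \<Rightarrow> 'h0"
  assumes G: "dd_closed_op G" and D: "dd_closed_op D" and GD: "neg_op (adjoint G) \<subseteq> D"
    and a: "bounded_clinear_op a" "coercive a"
    and m: "bounded_clinear_op m" "coercive m"
begin

lemma G_linear: "clinear_op G" and G_closed: "closed G"
  using G by (simp_all add: dd_closed_op_def)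

lemma D_linear: "clinear_op D" and D_closed: "closed D"
  using D by (simp_all add: dd_closed_op_def)

lemma Gring_linear: "clinear_op (Gring D)" and Gring_closed: "closed (Gring D)"
  using D unfolding Gring_def dd_closed_op_def
  by (auto intro: clinear_op_neg_op clinear_op_adjoint closed_neg_op closed_adjoint)

lemma Dring_linear: "clinear_op (Dring G)" and Dring_closed: "closed (Dring G)"
  using G unfolding Dring_def dd_closed_op_def
  by (auto intro: clinear_op_neg_op clinear_op_adjoint closed_neg_op closed_adjoint)

lemma Dring_subset: "Dring G \<subseteq> D"
  using GD by (simp add: Dring_def)

lemma Gring_subset: "Gring D \<subseteq> G"
proof -
  have "(x, w) \<in> adjoint (adjoint G)" if "(x, w) \<in> Gring D" for x w
    unfolding adjoint_iff[of x w]
  proof (intro allI impI)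
    fix y z assume "(y, z) \<in> adjoint G"
    then have "(y, - z) \<in> D" using GD by (auto simp: neg_op_iff)
    then have "cinner (- z) x = cinner y (- w)"
      using that by (simp add: Gring_def neg_op_iff adjoint_iff)
    then show "cinner z x = cinner y w" by (simp add: cinner_minus_left cinner_minus_right)
  qed
  then have "Gring D \<subseteq> adjoint (adjoint G)" by auto
  then show ?thesis
    using adjoint_adjoint_subset[OF clinear_op_csubspace[OF G_linear] G_closed] by blast
qed

lemma D_if_adjoint_orth:
  assumes "\<And>y z. (y, z) \<in> adjoint D \<Longrightarrow> cinner z x = cinner y w"
  shows "(x, w) \<in> D"
  using adjoint_adjoint_subset[OF clinear_op_csubspace[OF D_linear] D_closed] assms
  by (auto simp: adjoint_iff)

lemma G_if_adjoint_orth: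
  assumes "\<And>y z. (y, z) \<in> adjoint G \<Longrightarrow> cinner z x = cinner y w"
  shows "(x, w) \<in> G"
  using adjoint_adjoint_subset[OF clinear_op_csubspace[OF G_linear] G_closed] assms
  by (auto simp: adjoint_iff)

lemma green_Gring_D:
  assumes "(v, v') \<in> Gring D" "(z, z') \<in> D"
  shows "cinner v z' + cinner v' z = 0"
proof -
  have "cinner z' v = cinner z (- v')"
    using assms by (simp add: Gring_def neg_op_iff adjoint_iff)
  then have "cinner v z' = - cinner v' z"
    using cinner_commute[of v z'] cinner_commute[of v' z] by (simp add: cinner_minus_right)
  then show ?thesis by simp
qed

lemma green_G_Dring:
  assumes "(x, x') \<in> G" "(z, z') \<in> Dring G"
  shows "cinner x z' + cinner x' z = 0"
  using assms by (simp add: Dring_def neg_op_iff adjoint_iff cinner_minus_right)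

definition solves :: "'h0 \<Rightarrow> 'h0 \<Rightarrow> bool" where
  "solves u0 u \<longleftrightarrow> u \<in> opdom G \<and> a (opapp G u) \<in> opdom D \<and> m u - opapp D (a (opapp G u)) = 0
     \<and> u - u0 \<in> opdom (Gring D)"

lemma solves_weak:
  assumes "solves u0 u" "(v, v') \<in> Gring D"
  shows "diag_form m a (v, v') (u, opapp G u) = 0"
proof -
  have "(a (opapp G u), m u) \<in> D"
    using assms(1) opapp_in_graph[OF D_linear] by (auto simp: solves_def)
  from green_Gring_D[OF assms(2) this] show ?thesis by (simp add: diag_form_def)
qed

text \<open>Weak solutions are strong: the weak equation says \<open>(a G u, m u) \<in> D** = D\<close>.\<close>

lemma solves_if_weak:
  assumes "(u, opapp G u) \<in> G" "u - u0 \<in> opdom (Gring D)"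
    and weak: "\<And>v v'. (v, v') \<in> Gring D \<Longrightarrow> diag_form m a (v, v') (u, opapp G u) = 0"
  shows "solves u0 u"
proof -
  have "(a (opapp G u), m u) \<in> D"
  proof (rule D_if_adjoint_orth)
    fix y z assume "(y, z) \<in> adjoint D"
    then have "(y, - z) \<in> Gring D" by (simp add: Gring_def neg_op_iff)
    from weak[OF this] show "cinner z (a (opapp G u)) = cinner y (m u)"
      by (simp add: diag_form_def cinner_minus_left add_eq_0_iff)
  qed
  then show ?thesis
    using assms opdomI[OF G_linear] opdomI[OF D_linear] opapp_eqI[OF D_linear]
    by (simp add: solves_def)
qed

lemma solves_unique:
  assumes "solves u0 u1" "solves u0 u2"
  shows "u1 = u2"
proof -
  define p where "p = (u1 - u2, opapp G u1 - opapp G u2)"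
  have "u1 - u2 \<in> opdom (Gring D)"
    using opdom_diff[OF Gring_linear, of "u1 - u0" "u2 - u0"] assms by (simp add: solves_def)
  then have "p \<in> Gring D"
    using opapp_in_graph[OF Gring_linear] opapp_subset[OF G_linear Gring_linear Gring_subset]
      opapp_diff[OF G_linear] assms by (force simp: solves_def p_def)
  then have "diag_form m a p p = 0"
    using solves_weak[OF assms(1)] solves_weak[OF assms(2)]
      diag_form_diff_right[OF m a, of p "(u1, opapp G u1)" "(u2, opapp G u2)"]
    by (simp add: p_def)
  then have "Re (diag_form m a p p) = 0" by simp
  moreover obtain \<mu> where "\<mu> > 0" "\<forall>q. \<mu> * (norm q)\<^sup>2 \<le> Re (diag_form m a q q)"
    using diag_form_coercive[OF m a] by blast
  ultimately have "\<mu> * (norm p)\<^sup>2 \<le> 0" by metis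
  then have "p = 0" using \<open>\<mu> > 0\<close> by (simp add: mult_le_0_iff)
  then show ?thesis by (simp add: p_def zero_prod_def)
qed

text \<open>Existence by Lax-Milgram on the closed subspace \<open>Gring D\<close> of \<open>H\<^sub>0 \<times> H\<^sub>1\<close>: seek
  \<open>u = u0 + w\<close> with \<open>w\<close> in the graph of \<open>G\<^sup>o\<close>.\<close>

lemma solves_exists:
  assumes u0: "u0 \<in> opdom G"
  shows "\<exists>u. solves u0 u"
proof -
  define g0 where "g0 = (u0, opapp G u0)"
  obtain M where M: "M \<ge> 0" "\<forall>p q. cmod (diag_form m a p q) \<le> M * norm p * norm q"
    using diag_form_bounded[OF m a] by blast
  obtain \<mu> where \<mu>: "\<mu> > 0" "\<forall>p. \<mu> * (norm p)\<^sup>2 \<le> Re (diag_form m a p p)"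
    using diag_form_coercive[OF m a] by blast
  have "\<exists>w\<in>Gring D. \<forall>v\<in>Gring D. diag_form m a v w = - diag_form m a v g0"
  proof (rule lax_milgram[OF clinear_op_csubspace[OF Gring_linear] Gring_closed
        sesquilinear_on_diag_form[OF m a], where M=M and \<mu>=\<mu> and K="M * norm g0"])
    show "antilinear_on (Gring D) (\<lambda>v. - diag_form m a v g0)"
      by (simp add: antilinear_on_def diag_form_def cinner_add_left cinner_scaleC_left algebra_simps)
    show "\<forall>v\<in>Gring D. cmod (- diag_form m a v g0) \<le> M * norm g0 * norm v"
      using M(2) by (metis norm_minus_cancel mult.commute mult.left_commute)
  qed (use M \<mu> in auto)
  then obtain w where w: "w \<in> Gring D" "\<forall>v\<in>Gring D. diag_form m a v w = - diag_form m a v g0"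
    by blast
  define u where "u = u0 + fst w"
  have "(u, opapp G u0 + snd w) \<in> G"
    using clinear_op_add[OF G_linear opapp_in_graph[OF G_linear u0], of "fst w" "snd w"]
      w(1) Gring_subset by (auto simp: u_def)
  then have Gu: "opapp G u = opapp G u0 + snd w" by (rule opapp_eqI[OF G_linear])
  have "solves u0 u"
  proof (rule solves_if_weak)
    show "(u, opapp G u) \<in> G" using Gu \<open>(u, _) \<in> G\<close> by simp
    show "u - u0 \<in> opdom (Gring D)" using opdomI[OF Gring_linear, of "fst w" "snd w"] w(1) by (simp add: u_def)
    have "(u, opapp G u) = g0 + w" unfolding Gu by (simp add: u_def g0_def prod_eq_iff)
    fix v v' assume "(v, v') \<in> Gring D"
    then show "diag_form m a (v, v') (u, opapp G u) = 0"
      using w(2) by (simp add: \<open>(u, opapp G u) = g0 + w\<close> diag_form_add_right[OF m a])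
  qed
  then show ?thesis by blast
qed

abbreviation sol :: "'h0 \<Rightarrow> 'h0" where
  "sol \<equiv> dtn_sol G D a m"

lemma solves_sol: "u0 \<in> opdom G \<Longrightarrow> solves u0 (sol u0)"
  unfolding dtn_sol_def solves_def[symmetric]
  using solves_exists solves_unique by (metis theI)

lemma sol_in_opdom: "u0 \<in> opdom G \<Longrightarrow> sol u0 \<in> opdom G"
  and sol_diff_in_opdom_Gring: "u0 \<in> opdom G \<Longrightarrow> sol u0 - u0 \<in> opdom (Gring D)"
  and aG_sol_in_opdom_D: "u0 \<in> opdom G \<Longrightarrow> a (opapp G (sol u0)) \<in> opdom D"
  and D_aG_sol: "u0 \<in> opdom G \<Longrightarrow> opapp D (a (opapp G (sol u0))) = m (sol u0)"
  using solves_sol by (simp_all add: solves_def)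

lemma sol_add:
  assumes "u0 \<in> opdom G" "u1 \<in> opdom G"
  shows "sol (u0 + u1) = sol u0 + sol u1"
proof (rule solves_unique[OF solves_sol[OF opdom_add[OF G_linear assms]]])
  have "(sol u0 + sol u1) - (u0 + u1) \<in> opdom (Gring D)"
    using opdom_add[OF Gring_linear sol_diff_in_opdom_Gring sol_diff_in_opdom_Gring] assms
    by (simp only: add_diff_add)
  then show "solves (u0 + u1) (sol u0 + sol u1)"
    using assms sol_in_opdom sol_diff_in_opdom_Gring aG_sol_in_opdom_D D_aG_sol
      opdom_add[OF G_linear] opdom_add[OF D_linear] opdom_add[OF Gring_linear]
      opapp_add[OF G_linear] opapp_add[OF D_linear]
    by (simp add: solves_def bounded_clinear_op_add[OF a(1)] bounded_clinear_op_add[OF m(1)])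
qed

lemma sol_scaleC:
  assumes "u0 \<in> opdom G"
  shows "sol (c *\<^sub>C u0) = c *\<^sub>C sol u0"
proof (rule solves_unique[OF solves_sol[OF opdom_scaleC[OF G_linear assms]]])
  have "c *\<^sub>C sol u0 - c *\<^sub>C u0 \<in> opdom (Gring D)"
    using opdom_scaleC[OF Gring_linear sol_diff_in_opdom_Gring[OF assms]] by (simp only: scaleC_diff_right)
  then show "solves (c *\<^sub>C u0) (c *\<^sub>C sol u0)"
    using assms sol_in_opdom sol_diff_in_opdom_Gring aG_sol_in_opdom_D D_aG_sol
      opdom_scaleC[OF G_linear] opdom_scaleC[OF D_linear] opdom_scaleC[OF Gring_linear]
      opapp_scaleC[OF G_linear] opapp_scaleC[OF D_linear]
    by (simp add: solves_def bounded_clinear_op_scaleC[OF a(1)] bounded_clinear_op_scaleC[OF m(1)])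
qed

abbreviation Lambda :: "'h0 \<Rightarrow> 'h1" where
  "Lambda \<equiv> dtn_Lambda G D a m"

lemma Lambda_in_BDD: "u0 \<in> opdom G \<Longrightarrow> Lambda u0 \<in> BDD G D"
  unfolding dtn_Lambda_def BDD_def
  by (rule projBD(1)[OF D_linear D_closed Dring_linear Dring_closed Dring_subset aG_sol_in_opdom_D])

lemma aG_sol_minus_Lambda: "u0 \<in> opdom G \<Longrightarrow> a (opapp G (sol u0)) - Lambda u0 \<in> opdom (Dring G)"
  unfolding dtn_Lambda_def
  by (rule diff_projBD_in_opdom[OF D_linear D_closed Dring_linear Dring_closed Dring_subset aG_sol_in_opdom_D])

definition dtn_form :: "'h0 \<Rightarrow> 'h0 \<Rightarrow> complex" where
  "dtn_form v0 u0 = diag_form m a (v0, opapp G v0) (sol u0, opapp G (sol u0))"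

lemma BDG_in_opdom: "u \<in> BDG G D \<Longrightarrow> u \<in> opdom G"
  by (simp add: BDG_def BD_def)

lemma BDD_in_opdom: "u \<in> BDD G D \<Longrightarrow> u \<in> opdom D"
  by (simp add: BDD_def BD_def)

text \<open>Green's formula for \<open>\<Lambda>\<close>: only the component of \<open>a G u\<close> in \<open>BD(D)\<close> is seen by
  \<open>dom G\<close>, the rest lies in \<open>dom D\<^sup>o\<close>.\<close>

lemma dtn_form_Lambda:
  assumes v0: "v0 \<in> opdom G" and u0: "u0 \<in> opdom G"
  shows "cinner v0 (opapp D (Lambda u0)) + cinner (opapp G v0) (Lambda u0) = dtn_form v0 u0"
proof -
  define y where "y = a (opapp G (sol u0))"
  define L where "L = Lambda u0"
  have L: "L \<in> opdom D" "y - L \<in> opdom (Dring G)"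
    using Lambda_in_BDD[OF u0] BDD_in_opdom aG_sol_minus_Lambda[OF u0] by (auto simp: y_def L_def)
  have y: "y \<in> opdom D" using aG_sol_in_opdom_D[OF u0] by (simp add: y_def)
  have "(y - L, opapp D y - opapp D L) \<in> Dring G"
    using opapp_in_graph[OF Dring_linear L(2)] opapp_subset[OF D_linear Dring_linear Dring_subset L(2)]
      opapp_diff[OF D_linear y L(1)] by simp
  then have "cinner v0 (opapp D y - opapp D L) + cinner (opapp G v0) (y - L) = 0"
    using green_G_Dring[OF opapp_in_graph[OF G_linear v0]] by blast
  then have "cinner v0 (opapp D L) + cinner (opapp G v0) L = cinner v0 (opapp D y) + cinner (opapp G v0) y"
    by (simp add: cinner_diff_right algebra_simps)
  then show ?thesis using D_aG_sol[OF u0] by (simp add: dtn_form_def diag_form_def y_def L_def)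
qed

lemma dtn_form_shift_left:
  assumes v0: "v0 \<in> opdom G" and u0: "u0 \<in> opdom G"
    and v: "v \<in> opdom G" "v - v0 \<in> opdom (Gring D)"
  shows "dtn_form v0 u0 = diag_form m a (v, opapp G v) (sol u0, opapp G (sol u0))"
proof -
  have "(v - v0, opapp G v - opapp G v0) \<in> Gring D"
    using opapp_in_graph[OF Gring_linear v(2)] opapp_subset[OF G_linear Gring_linear Gring_subset v(2)]
      opapp_diff[OF G_linear v(1) v0] by simp
  from solves_weak[OF solves_sol[OF u0] this]
  show ?thesis by (simp add: dtn_form_def diag_form_def cinner_diff_left algebra_simps)
qed

lemma G_BDG_in_D:
  assumes u: "u \<in> BDG G D"
  shows "(opapp G u, u) \<in> D"
proof (rule D_if_adjoint_orth)
  fix y z assume "(y, z) \<in> adjoint D"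
  then have yz: "(y, - z) \<in> Gring D" by (simp add: Gring_def neg_op_iff)
  then have "opapp G y = - z" "gip G y u = 0"
    using Gring_subset opapp_eqI[OF G_linear] opdomI[OF Gring_linear] u
    by (auto simp: BDG_def BD_def)
  then show "cinner z (opapp G u) = cinner y u" by (simp add: gip_def cinner_minus_left)
qed

lemma D_BDD_in_G:
  assumes y: "y \<in> BDD G D"
  shows "(opapp D y, y) \<in> G"
proof (rule G_if_adjoint_orth)
  fix p q assume "(p, q) \<in> adjoint G"
  then have "(p, - q) \<in> Dring G" by (simp add: Dring_def neg_op_iff)
  then have "opapp D p = - q" "gip D p y = 0"
    using Dring_subset opapp_eqI[OF D_linear] opdomI[OF Dring_linear] y
    by (auto simp: BDD_def BD_def)
  then show "cinner q (opapp D y) = cinner p y" by (simp add: gip_def cinner_minus_left)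
qed

lemma D_BDD_in_BDG:
  assumes y: "y \<in> BDD G D"
  shows "opapp D y \<in> BDG G D" "opapp G (opapp D y) = y"
proof -
  have yG: "(opapp D y, y) \<in> G" by (rule D_BDD_in_G[OF y])
  show Gy: "opapp G (opapp D y) = y" using opapp_eqI[OF G_linear yG] .
  have "gip G v (opapp D y) = 0" if v: "v \<in> opdom (Gring D)" for v
    using green_Gring_D[OF opapp_in_graph[OF Gring_linear v] opapp_in_graph[OF D_linear BDD_in_opdom[OF y]]]
    by (simp add: gip_def Gy opapp_subset[OF G_linear Gring_linear Gring_subset v])
  then show "opapp D y \<in> BDG G D" using opdomI[OF G_linear yG] by (simp add: BDG_def BD_def)
qed

lemma dtn_form_self:
  "u0 \<in> opdom G \<Longrightarrow> dtn_form u0 u0 = diag_form m a (sol u0, opapp G (sol u0)) (sol u0, opapp G (sol u0))"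
  by (rule dtn_form_shift_left[OF _ _ sol_in_opdom sol_diff_in_opdom_Gring])

text \<open>\<open>sol u0 - u0 \<in> dom G\<^sup>o\<close> is graph-orthogonal to \<open>u0 \<in> BD(G)\<close>, so the solution has the
  larger graph norm (Dirichlet principle).\<close>

lemma norm_graph_le_sol:
  assumes u0: "u0 \<in> BDG G D"
  shows "norm (u0, opapp G u0) \<le> norm (sol u0, opapp G (sol u0))"
proof -
  have d0: "u0 \<in> opdom G" using BDG_in_opdom[OF u0] .
  define w where "w = sol u0 - u0"
  have "w \<in> opdom (Gring D)" using sol_diff_in_opdom_Gring[OF d0] by (simp add: w_def)
  then have "gip G w u0 = 0" using u0 by (simp add: BDG_def BD_def)
  then have "cinner (u0, opapp G u0) (w, opapp G w) = 0"
    using cinner_eq_0_commute[of "(w, opapp G w)" "(u0, opapp G u0)"]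
    by (simp add: gip_eq_cinner_graph del: cinner_Pair)
  moreover have "(sol u0, opapp G (sol u0)) = (u0, opapp G u0) + (w, opapp G w)"
    using opapp_diff[OF G_linear sol_in_opdom[OF d0] d0] by (simp add: w_def)
  ultimately have "(norm (sol u0, opapp G (sol u0)))\<^sup>2 = (norm (u0, opapp G u0))\<^sup>2 + (norm (w, opapp G w))\<^sup>2"
    by (simp only: pythagoras)
  then show ?thesis by (simp add: power2_le_imp_le)
qed

lemma dtn_form_coercive:
  "\<exists>\<mu>>0. \<forall>u0\<in>BDG G D. \<mu> * (norm (sol u0, opapp G (sol u0)))\<^sup>2 \<le> Re (dtn_form u0 u0)
     \<and> \<mu> * (norm (u0, opapp G u0))\<^sup>2 \<le> Re (dtn_form u0 u0)"
proof -
  obtain \<mu> where \<mu>: "\<mu> > 0" "\<forall>p. \<mu> * (norm p)\<^sup>2 \<le> Re (diag_form m a p p)"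
    using diag_form_coercive[OF m a] by blast
  have "\<mu> * (norm (sol u0, opapp G (sol u0)))\<^sup>2 \<le> Re (dtn_form u0 u0)
      \<and> \<mu> * (norm (u0, opapp G u0))\<^sup>2 \<le> Re (dtn_form u0 u0)" if u0: "u0 \<in> BDG G D" for u0
  proof -
    have "\<mu> * (norm (sol u0, opapp G (sol u0)))\<^sup>2 \<le> Re (dtn_form u0 u0)"
      using \<mu>(2) dtn_form_self[OF BDG_in_opdom[OF u0]] by simp
    moreover have "\<mu> * (norm (u0, opapp G u0))\<^sup>2 \<le> \<mu> * (norm (sol u0, opapp G (sol u0)))\<^sup>2"
      using norm_graph_le_sol[OF u0] \<mu>(1) by (simp add: power_mono)
    ultimately show ?thesis by linarith
  qed
  then show ?thesis using \<mu>(1) by blast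
qed

lemma dtn_form_bounded:
  "\<exists>M. \<forall>v0\<in>BDG G D. \<forall>u0\<in>BDG G D.
     cmod (dtn_form v0 u0) \<le> M * norm (v0, opapp G v0) * norm (u0, opapp G u0)"
proof -
  obtain M where M: "M \<ge> 0" "\<forall>p q. cmod (diag_form m a p q) \<le> M * norm p * norm q"
    using diag_form_bounded[OF m a] by blast
  obtain \<mu> where \<mu>: "\<mu> > 0" "\<forall>u0\<in>BDG G D. \<mu> * (norm (sol u0, opapp G (sol u0)))\<^sup>2 \<le> Re (dtn_form u0 u0)"
    using dtn_form_coercive by blast
  have bound: "cmod (dtn_form v0 u0) \<le> M * norm (v0, opapp G v0) * norm (sol u0, opapp G (sol u0))"
    for v0 u0 using M(2) by (simp add: dtn_form_def)
  have sol_bound: "norm (sol u0, opapp G (sol u0)) \<le> (M / \<mu>) * norm (u0, opapp G u0)"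
    if u0: "u0 \<in> BDG G D" for u0
  proof -
    let ?n = "norm (sol u0, opapp G (sol u0))"
    have "\<mu> * ?n\<^sup>2 \<le> Re (dtn_form u0 u0)" using \<mu>(2) u0 by blast
    also have "\<dots> \<le> cmod (dtn_form u0 u0)" by (rule complex_Re_le_cmod)
    also have "\<dots> \<le> M * norm (u0, opapp G u0) * ?n" by (rule bound)
    finally have "\<mu> * ?n \<le> M * norm (u0, opapp G u0)"
      by (cases "?n = 0") (use M(1) in \<open>auto simp: power2_eq_square\<close>)
    then show ?thesis using \<mu>(1) by (simp add: field_simps)
  qed
  have "cmod (dtn_form v0 u0) \<le> (M * M / \<mu>) * norm (v0, opapp G v0) * norm (u0, opapp G u0)"
    if "u0 \<in> BDG G D" for u0 v0
  proof -
    have "cmod (dtn_form v0 u0) \<le> M * norm (v0, opapp G v0) * norm (sol u0, opapp G (sol u0))"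
      by (rule bound)
    also have "\<dots> \<le> M * norm (v0, opapp G v0) * ((M / \<mu>) * norm (u0, opapp G u0))"
      using sol_bound[OF that] M(1) by (intro mult_left_mono) auto
    finally show ?thesis by (simp add: ac_simps)
  qed
  then show ?thesis by blast
qed

abbreviation graph_BDG :: "('h0 \<times> 'h1) set" where
  "graph_BDG \<equiv> G \<inter> orth (Gring D)"

lemma graph_BDG_iff: "p \<in> graph_BDG \<longleftrightarrow> fst p \<in> BDG G D \<and> p = (fst p, opapp G (fst p))"
  using graph_orth_BD[OF G_linear G_closed Gring_linear Gring_closed Gring_subset]
    BD_iff_graph_orth[OF G_linear G_closed Gring_linear Gring_closed Gring_subset]
    opapp_in_graph[OF G_linear]
  unfolding BDG_def by (metis IntI prod.collapse)

lemma csubspace_graph_BDG: "csubspace graph_BDG" and closed_graph_BDG: "closed graph_BDG"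
  using csubspace_graph_orth closed_graph_orth G_linear G_closed Gring_linear Gring_closed Gring_subset
  by auto

lemma csubspace_BDG: "csubspace (BDG G D)"
  unfolding BDG_def by (rule csubspace_BD[OF G_linear G_closed Gring_linear Gring_closed Gring_subset])

lemma sesquilinear_on_dtn_form: "sesquilinear_on graph_BDG (\<lambda>p q. dtn_form (fst p) (fst q))"
proof -
  have "fst p \<in> opdom G" if "p \<in> graph_BDG" for p
    using that graph_BDG_iff BDG_in_opdom by blast
  then show ?thesis
    using sesquilinear_on_diag_form[OF m a, of UNIV] csubspace_graph_BDG
    by (simp add: sesquilinear_on_def antilinear_on_def csubspace_def dtn_form_def sol_add sol_scaleC
        opapp_add[OF G_linear] opapp_scaleC[OF G_linear] sol_in_opdom)
qed

lemma dtn_form_hermitian: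
  assumes "bounded_selfadjoint a" "bounded_selfadjoint m" "u0 \<in> opdom G" "v0 \<in> opdom G"
  shows "dtn_form v0 u0 = cnj (dtn_form u0 v0)"
  using dtn_form_shift_left[OF assms(4,3) sol_in_opdom sol_diff_in_opdom_Gring]
    dtn_form_shift_left[OF assms(3,4) sol_in_opdom sol_diff_in_opdom_Gring]
    diag_form_hermitian[OF assms(2,1), of "(sol v0, opapp G (sol v0))" "(sol u0, opapp G (sol u0))"]
    assms(3,4) by simp

section \<open>The Dirichlet-to-Neumann operator in \<open>H\<close>\<close>

context
  fixes \<kappa> :: "'h0 \<Rightarrow> 'h::chilbert_space"
  assumes kappa_linear: "clinear_on (BDG G D) \<kappa>"
    and kappa_bounded: "\<exists>C. \<forall>u \<in> BDG G D. norm (\<kappa> u) \<le> C * gnorm G u"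
begin

lemma kappa_graph_bounded: "\<exists>C. \<forall>p\<in>graph_BDG. norm ((\<kappa> \<circ> fst) p) \<le> C * norm p"
proof -
  obtain C where C: "\<forall>u \<in> BDG G D. norm (\<kappa> u) \<le> C * gnorm G u" using kappa_bounded by blast
  have "norm (\<kappa> (fst p)) \<le> C * norm p" if "p \<in> graph_BDG" for p
    using C graph_BDG_iff[of p] that by (metis gnorm_eq_norm_graph)
  then show ?thesis unfolding comp_def by blast
qed

lemma kappa_graph_linear: "clinear_on graph_BDG (\<kappa> \<circ> fst)"
  using kappa_linear graph_BDG_iff by (auto simp: clinear_on_def)

lemma kappa_adj_eqI:
  assumes "z \<in> BDG G D" "\<forall>v\<in>BDG G D. cinner (\<kappa> v) \<psi> = gip G v z"
  shows "kappa_adj G D \<kappa> \<psi> = z"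
  unfolding kappa_adj_def
proof (rule the_equality)
  fix w assume w: "w \<in> BDG G D \<and> (\<forall>v\<in>BDG G D. cinner (\<kappa> v) \<psi> = gip G v w)"
  then have "gip G (w - z) (w - z) = 0"
    using assms csubspace_diff[OF csubspace_BDG] BDG_in_opdom
    by (simp add: gip_diff_right[OF G_linear])
  then show "w = z" using eq_0_if_gip_self_eq_0 by force
qed (use assms in blast)

text \<open>\<open>\<kappa>*\<close> exists by the Riesz representation theorem on the closed subspace \<open>graph_BDG\<close>, which
  is \<open>BD(G)\<close> with its graph inner product.\<close>

lemma kappa_adj:
  shows "kappa_adj G D \<kappa> \<psi> \<in> BDG G D"
    and "\<forall>v\<in>BDG G D. cinner (\<kappa> v) \<psi> = gip G v (kappa_adj G D \<kappa> \<psi>)"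
proof -
  obtain C where C: "\<forall>p\<in>graph_BDG. norm ((\<kappa> \<circ> fst) p) \<le> C * norm p"
    using kappa_graph_bounded by blast
  have "\<exists>w\<in>graph_BDG. \<forall>p\<in>graph_BDG. cinner ((\<kappa> \<circ> fst) p) \<psi> = cinner p w"
  proof (rule riesz_representation[OF csubspace_graph_BDG closed_graph_BDG, where K="C * norm \<psi>"])
    show "antilinear_on graph_BDG (\<lambda>p. cinner ((\<kappa> \<circ> fst) p) \<psi>)"
      using kappa_graph_linear csubspace_graph_BDG
      by (simp add: antilinear_on_def clinear_on_def cinner_add_left cinner_scaleC_left)
    show "\<forall>p\<in>graph_BDG. cmod (cinner ((\<kappa> \<circ> fst) p) \<psi>) \<le> C * norm \<psi> * norm p"
    proof
      fix p assume "p \<in> graph_BDG"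
      have "cmod (cinner ((\<kappa> \<circ> fst) p) \<psi>) \<le> norm ((\<kappa> \<circ> fst) p) * norm \<psi>"
        by (rule cinner_Cauchy_Schwarz)
      also have "\<dots> \<le> C * norm p * norm \<psi>" using C \<open>p \<in> graph_BDG\<close> by (simp add: mult_right_mono)
      finally show "cmod (cinner ((\<kappa> \<circ> fst) p) \<psi>) \<le> C * norm \<psi> * norm p" by (simp add: ac_simps)
    qed
  qed
  then obtain w where w: "w \<in> graph_BDG" "\<forall>p\<in>graph_BDG. cinner (\<kappa> (fst p)) \<psi> = cinner p w"
    by auto
  have "cinner (\<kappa> v) \<psi> = gip G v (fst w)" if "v \<in> BDG G D" for v
  proof -
    have "(v, opapp G v) \<in> graph_BDG" using that graph_BDG_iff[of "(v, opapp G v)"] by simp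
    then have "cinner (\<kappa> v) \<psi> = cinner (v, opapp G v) w" using w(2) by force
    also have "\<dots> = gip G v (fst w)"
      using graph_BDG_iff[of w] w(1) gip_eq_cinner_graph[of G v "fst w"] by simp
    finally show ?thesis .
  qed
  then have fw: "\<forall>v\<in>BDG G D. cinner (\<kappa> v) \<psi> = gip G v (fst w)" by blast
  moreover have "fst w \<in> BDG G D" using w(1) graph_BDG_iff by blast
  ultimately have "kappa_adj G D \<kappa> \<psi> = fst w" by (rule kappa_adj_eqI[rotated])
  then show "kappa_adj G D \<kappa> \<psi> \<in> BDG G D" "\<forall>v\<in>BDG G D. cinner (\<kappa> v) \<psi> = gip G v (kappa_adj G D \<kappa> \<psi>)"
    using fw \<open>fst w \<in> BDG G D\<close> by auto
qed

text \<open>The defining relation \<open>\<Lambda> u0 = G \<kappa>* \<psi>\<close> of \<open>\<Lambda>\<^sub>H\<close> is equivalent, by Green's formula,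
  to the weak relation \<open>(\<kappa> v0, \<psi>) = dtn_form v0 u0\<close> for all \<open>v0 \<in> BD(G)\<close>.\<close>

lemma dtn_H_iff:
  "(\<phi>, \<psi>) \<in> dtn_H G D a m \<kappa> \<longleftrightarrow>
    (\<exists>u0\<in>BDG G D. \<kappa> u0 = \<phi> \<and> (\<forall>v0\<in>BDG G D. cinner (\<kappa> v0) \<psi> = dtn_form v0 u0))"
proof -
  have "Lambda u0 = opapp G (kappa_adj G D \<kappa> \<psi>) \<longleftrightarrow> (\<forall>v0\<in>BDG G D. cinner (\<kappa> v0) \<psi> = dtn_form v0 u0)"
    if u0: "u0 \<in> BDG G D" for u0
  proof
    assume \<Lambda>: "Lambda u0 = opapp G (kappa_adj G D \<kappa> \<psi>)"
    have "opapp D (Lambda u0) = kappa_adj G D \<kappa> \<psi>"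
      unfolding \<Lambda> using opapp_eqI[OF D_linear G_BDG_in_D[OF kappa_adj(1)]] .
    then show "\<forall>v0\<in>BDG G D. cinner (\<kappa> v0) \<psi> = dtn_form v0 u0"
      using kappa_adj(2) dtn_form_Lambda[OF BDG_in_opdom BDG_in_opdom[OF u0]] \<Lambda>
      by (simp add: gip_def)
  next
    assume weak: "\<forall>v0\<in>BDG G D. cinner (\<kappa> v0) \<psi> = dtn_form v0 u0"
    have L: "Lambda u0 \<in> BDD G D" using Lambda_in_BDD[OF BDG_in_opdom[OF u0]] .
    have "\<forall>v0\<in>BDG G D. cinner (\<kappa> v0) \<psi> = gip G v0 (opapp D (Lambda u0))"
      using weak dtn_form_Lambda[OF BDG_in_opdom BDG_in_opdom[OF u0]] D_BDD_in_BDG(2)[OF L]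
      by (simp add: gip_def)
    then have "kappa_adj G D \<kappa> \<psi> = opapp D (Lambda u0)"
      by (rule kappa_adj_eqI[OF D_BDD_in_BDG(1)[OF L]])
    then show "Lambda u0 = opapp G (kappa_adj G D \<kappa> \<psi>)" using D_BDD_in_BDG(2)[OF L] by simp
  qed
  then show ?thesis unfolding dtn_H_def by blast
qed

lemma dtn_H_eq_form_operator:
  "dtn_H G D a m \<kappa> = form_operator graph_BDG (\<lambda>p q. dtn_form (fst p) (fst q)) (\<kappa> \<circ> fst)"
proof -
  have "(\<exists>u0\<in>BDG G D. P u0) \<longleftrightarrow> (\<exists>p\<in>graph_BDG. P (fst p))"
    and "(\<forall>u0\<in>BDG G D. P u0) \<longleftrightarrow> (\<forall>p\<in>graph_BDG. P (fst p))" for P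
    using graph_BDG_iff by (metis fst_conv)+
  then show ?thesis
    by (auto simp: dtn_H_iff form_operator_iff)
qed

lemma coercive_form_dtn:
  assumes "inj_on \<kappa> (BDG G D)" "closure (\<kappa> ` BDG G D) = UNIV"
  shows "coercive_form graph_BDG (\<lambda>p q. dtn_form (fst p) (fst q)) (\<kappa> \<circ> fst)"
proof
  show "csubspace graph_BDG" "closed graph_BDG" by (rule csubspace_graph_BDG closed_graph_BDG)+
  show "sesquilinear_on graph_BDG (\<lambda>p q. dtn_form (fst p) (fst q))" by (rule sesquilinear_on_dtn_form)
  show "\<exists>M. \<forall>p\<in>graph_BDG. \<forall>q\<in>graph_BDG. cmod (dtn_form (fst p) (fst q)) \<le> M * norm p * norm q"
    using dtn_form_bounded graph_BDG_iff by metis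
  show "\<exists>\<mu>>0. \<forall>p\<in>graph_BDG. \<mu> * (norm p)\<^sup>2 \<le> Re (dtn_form (fst p) (fst p))"
    using dtn_form_coercive graph_BDG_iff by metis
  show "clinear_on graph_BDG (\<kappa> \<circ> fst)" by (rule kappa_graph_linear)
  show "\<exists>C. \<forall>p\<in>graph_BDG. norm ((\<kappa> \<circ> fst) p) \<le> C * norm p" by (rule kappa_graph_bounded)
  have "(\<kappa> \<circ> fst) ` graph_BDG = \<kappa> ` BDG G D"
    using graph_BDG_iff by (force simp: image_iff)
  then show "closure ((\<kappa> \<circ> fst) ` graph_BDG) = UNIV" using assms(2) by simp
  show "inj_on (\<kappa> \<circ> fst) graph_BDG"
  proof (rule inj_onI)
    fix p q assume pq: "p \<in> graph_BDG" "q \<in> graph_BDG" "(\<kappa> \<circ> fst) p = (\<kappa> \<circ> fst) q"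
    then have "fst p = fst q" using assms(1) graph_BDG_iff by (auto dest: inj_onD)
    then show "p = q" using graph_BDG_iff pq(1,2) by metis
  qed
qed

end

end

theorem theorem3p4:
  fixes G :: "('h0::chilbert_space \<times> 'h1::chilbert_space) set"
    and D :: "('h1 \<times> 'h0) set"
    and \<kappa> :: "'h0 \<Rightarrow> 'h::chilbert_space"
    and a :: "'h1 \<Rightarrow> 'h1"
    and m :: "'h0 \<Rightarrow> 'h0"
  assumes G: "dd_closed_op G"
    and D: "dd_closed_op D"
    and GD: "neg_op (adjoint G) \<subseteq> D"
    and kappa_lin: "clinear_on (BDG G D) \<kappa>"
    and kappa_bdd: "\<exists>C. \<forall>u \<in> BDG G D. norm (\<kappa> u) \<le> C * gnorm G u"
    and kappa_inj: "inj_on \<kappa> (BDG G D)"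
    and kappa_dense: "closure (\<kappa> ` BDG G D) = UNIV"
    and a: "bounded_clinear_op a" "coercive a"
    and m: "bounded_clinear_op m" "coercive m"
  shows "m_sectorial (dtn_H G D a m \<kappa>)
    \<and> (bounded_selfadjoint a \<and> bounded_selfadjoint m \<longrightarrow> selfadjoint_op (dtn_H G D a m \<kappa>))"
proof -
  interpret dirichlet_to_neumann G D a m
    using G D GD a m by unfold_locales
  interpret coercive_form graph_BDG "\<lambda>p q. dtn_form (fst p) (fst q)" "\<kappa> \<circ> fst"
    by (rule coercive_form_dtn[OF kappa_lin kappa_bdd kappa_inj kappa_dense])
  have hermitian: "\<forall>p\<in>graph_BDG. \<forall>q\<in>graph_BDG. dtn_form (fst q) (fst p) = cnj (dtn_form (fst p) (fst q))"
    if "bounded_selfadjoint a" "bounded_selfadjoint m"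
    using dtn_form_hermitian[OF that] graph_BDG_iff BDG_in_opdom by blast
  show ?thesis
    unfolding dtn_H_eq_form_operator[OF kappa_lin kappa_bdd]
    using m_sectorial_form_operator selfadjoint_form_operator hermitian by blast
qed

end
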